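(* Let $M$ be an ACI-matrix over a field $\mathbb{F}$. If $F_1,F_2$ are factor sets of $M$, then $F_1\cap F_2$ and $F_1\cup F_2$ are factor sets of $M$. If $F_1,F_2$ are semifactor sets of $M$, then $F_1\cap F_2$ and $F_1\cup F_2$ are semifactor sets of $M$.
   Context: Let $\mathbb{F}$ be a field. An ACI-matrix is a matrix with entries in $\mathbb{F}[x_1,\dots,x_k]$ whose entries are polynomials of degree at most one and such that no indeterminate appears in two different columns. A completion is an assignment of values in $\mathbb{F}$ to all indeterminates; $\mathrm{maxRank}(N)$ is the maximum rank of a completion. ACI-matrices (and blocks) of size $0\times q$ ($q>0$, wide degenerate), $p\times 0$ ($p>0$, tall degenerate) and $0\times0$ (void) are allowed. $N$ is FRmR if $\mathrm{maxRank}(N)=\mathrm{rows}(N)$, FCmR if $\mathrm{maxRank}(N)=\mathrm{cols}(N)$; by convention tall degenerate is FRmR, wide degenerate is FCmR, void is both. For an $m\times n$ block matrix $\begin{bmatrix} A & B\\ 0 & C\end{bmatrix}$ with lower-left $r\times s$ zero block, the zero block is Big if $r+s>\max\{m,n\}$, Medium if $r+s=\max\{m,n\}$. For $F=\{f_1<\dots<f_s\}\subseteq\{1,\dots,n\}$ with complement $\{g_1<\dots<g_{n-s}\}$, $Q_F$ is the $n\times n$ permutation matrix such that $MQ_F$ has as columns $f_1,\dots,f_s,g_1,\dots,g_{n-s}$ of $M$ in that order. For an $m\times n$ ACI-matrix $M$, $F$ is a factor set of $M$ if there is a nonsingular constant $m\times m$ matrix $R$ with $RMQ_F=\begin{bmatrix}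 A & B\\ 0 & C\end{bmatrix}$, where $A$ has $\#F$ columns, the zero block is Big, $A$ is FRmR and $C$ is FCmR; $F$ is a semifactor set if the same holds with the zero block Medium. *)

theory Defs
  imports "Jordan_Normal_Form.DL_Rank"
begin

text \<open>An affine polynomial (degree at most one) in the indeterminates x_0, x_1, ... is
  represented by its coefficient function e: e 0 is the constant term and e (Suc v)
  is the coefficient of the indeterminate x_v.\<close>
type_synonym 'a aff = "nat \<Rightarrow> 'a"

definition aci_matrix :: "nat \<Rightarrow> 'a::field aff mat \<Rightarrow> bool" where
  "aci_matrix k M \<longleftrightarrow>
     (\<forall>i<dim_row M. \<forall>j<dim_col M. \<forall>v. k \<le> v \<longrightarrow> (M $$ (i,j)) (Suc v) = 0) \<and>
     (\<forall>v<k. \<forall>i j i' j'. i < dim_row M \<and> j < dim_col M \<and> i' < dim_row M \<and> j' < dim_col M \<and>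
        (M $$ (i,j)) (Suc v) \<noteq> 0 \<and> (M $$ (i',j')) (Suc v) \<noteq> 0 \<longrightarrow> j = j')"

definition completion :: "nat \<Rightarrow> 'a::field aff mat \<Rightarrow> (nat \<Rightarrow> 'a) \<Rightarrow> 'a mat" where
  "completion k M x = mat (dim_row M) (dim_col M)
     (\<lambda>ij. (M $$ ij) 0 + (\<Sum>v<k. (M $$ ij) (Suc v) * x v))"

definition maxRank :: "nat \<Rightarrow> 'a::field aff mat \<Rightarrow> nat" where
  "maxRank k M = Max ((\<lambda>x. vec_space.rank (dim_row M) (completion k M x)) ` UNIV)"

definition FRmR :: "nat \<Rightarrow> 'a::field aff mat \<Rightarrow> bool" where
  "FRmR k N \<longleftrightarrow> dim_col N = 0 \<or> maxRank k N = dim_row N"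

definition FCmR :: "nat \<Rightarrow> 'a::field aff mat \<Rightarrow> bool" where
  "FCmR k N \<longleftrightarrow> dim_row N = 0 \<or> maxRank k N = dim_col N"

definition const_mult :: "'a::field mat \<Rightarrow> 'a aff mat \<Rightarrow> 'a aff mat" where
  "const_mult R M = mat (dim_row R) (dim_col M)
     (\<lambda>(i,j) t. \<Sum>l<dim_col R. R $$ (i,l) * (M $$ (l,j)) t)"

definition col_perm :: "nat set \<Rightarrow> 'b mat \<Rightarrow> 'b mat" where
  "col_perm F M = mat (dim_row M) (dim_col M)
     (\<lambda>(i,j). M $$ (i, (sorted_list_of_set F @ sorted_list_of_set ({0..<dim_col M} - F)) ! j))"

text \<open>Common part of factor / semifactor sets; the relation P compares r+s with max m n,
  where r \<times> s is the size of the lower-left zero block.\<close>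
definition block_set :: "(nat \<Rightarrow> nat \<Rightarrow> bool) \<Rightarrow> nat \<Rightarrow> 'a::field aff mat \<Rightarrow> nat set \<Rightarrow> bool" where
  "block_set P k M F \<longleftrightarrow> F \<subseteq> {0..<dim_col M} \<and>
     (\<exists>R r. R \<in> carrier_mat (dim_row M) (dim_row M) \<and> invertible_mat R \<and> r \<le> dim_row M \<and>
        (case split_block (const_mult R (col_perm F M)) (dim_row M - r) (card F) of
          (A, B, Z, C) \<Rightarrow>
            (\<forall>i<r. \<forall>j<card F. Z $$ (i,j) = (\<lambda>_. 0)) \<and>
            P (r + card F) (max (dim_row M) (dim_col M)) \<and>
            FRmR k A \<and> FCmR k C))"

definition factor_set :: "nat \<Rightarrow> 'a::field aff mat \<Rightarrow> nat set \<Rightarrow> bool" where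
  "factor_set k M F \<longleftrightarrow> block_set (\<lambda>a b. a > b) k M F"

definition semifactor_set :: "nat \<Rightarrow> 'a::field aff mat \<Rightarrow> nat set \<Rightarrow> bool" where
  "semifactor_set k M F \<longleftrightarrow> block_set (\<lambda>a b. a = b) k M F"

end

theory Submission
  imports Defs
begin

definition indep_cols :: "('r \<Rightarrow> 'c \<Rightarrow> 'a::field) \<Rightarrow> 'r set \<Rightarrow> 'c set \<Rightarrow> bool" where
  "indep_cols e I J \<longleftrightarrow> finite J \<and>
     (\<forall>c. (\<forall>i\<in>I. (\<Sum>j\<in>J. c j * e i j) = 0) \<longrightarrow> (\<forall>j\<in>J. c j = 0))"

definition col_rank :: "('r \<Rightarrow> 'c \<Rightarrow> 'a::field) \<Rightarrow> 'r set \<Rightarrow> 'c set \<Rightarrow> nat" where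
  "col_rank e I S = Max (card ` {J. J \<subseteq> S \<and> indep_cols e I J})"

lemma indep_cols_empty [simp]: "indep_cols e I {}"
  unfolding indep_cols_def by auto

lemma indep_cols_finite: "indep_cols e I J \<Longrightarrow> finite J"
  unfolding indep_cols_def by auto

lemma indep_cols_subset:
  assumes ind: "indep_cols e I J" and sub: "J' \<subseteq> J"
  shows "indep_cols e I J'"
  unfolding indep_cols_def
proof (intro conjI allI impI ballI)
  show "finite J'" using indep_cols_finite[OF ind] sub by (rule finite_subset[rotated])
next
  fix c j assume h: "\<forall>i\<in>I. (\<Sum>j\<in>J'. c j * e i j) = 0" and j: "j \<in> J'"
  define c' where "c' j = (if j \<in> J' then c j else 0)" for j
  have "(\<Sum>j\<in>J. c' j * e i j) = (\<Sum>j\<in>J'. c j * e i j)" for i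
    using indep_cols_finite[OF ind] sub by (intro sum.mono_neutral_cong_right) (auto simp: c'_def)
  then have "\<forall>i\<in>I. (\<Sum>j\<in>J. c' j * e i j) = 0" using h by simp
  then have "\<forall>j\<in>J. c' j = 0" using ind unfolding indep_cols_def by blast
  then have "c' j = 0" using j sub by blast
  then show "c j = 0" using j by (simp add: c'_def)
qed

lemma indep_cols_cong:
  assumes "\<forall>i\<in>I. \<forall>j\<in>J. e i j = e' i j"
  shows "indep_cols e I J \<longleftrightarrow> indep_cols e' I J"
proof -
  have "(\<Sum>j\<in>J. c j * e i j) = (\<Sum>j\<in>J. c j * e' i j)" if "i \<in> I" for c i
    using assms that by (intro sum.cong) auto
  then show ?thesis unfolding indep_cols_def by auto
qed

lemma finite_card_indep_cols:
  "finite S \<Longrightarrow> finite (card ` {J. J \<subseteq> S \<and> indep_cols e I J})"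
  by (intro finite_imageI) (auto intro: finite_subset[of _ "Pow S"])

lemma card_le_col_rank:
  assumes "finite S" "J \<subseteq> S" "indep_cols e I J"
  shows "card J \<le> col_rank e I S"
  unfolding col_rank_def using assms by (intro Max_ge finite_card_indep_cols) auto

lemma col_rank_basis:
  assumes "finite S"
  obtains J where "J \<subseteq> S" "indep_cols e I J" "card J = col_rank e I S"
proof -
  have "col_rank e I S \<in> card ` {J. J \<subseteq> S \<and> indep_cols e I J}"
    unfolding col_rank_def using assms by (intro Max_in finite_card_indep_cols) auto
  then show ?thesis using that by auto
qed

lemma col_rank_maximal_basis:
  assumes "finite S"
  obtains J where "J \<subseteq> S" "indep_cols e I J" "card J = col_rank e I S"
    "\<forall>j\<in>S - J. \<not> indep_cols e I (insert j J)"
proof -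
  obtain J where J: "J \<subseteq> S" "indep_cols e I J" "card J = col_rank e I S"
    by (rule col_rank_basis[OF assms])
  have "\<forall>j\<in>S - J. \<not> indep_cols e I (insert j J)"
  proof (intro ballI notI)
    fix j assume j: "j \<in> S - J" and ind: "indep_cols e I (insert j J)"
    have "insert j J \<subseteq> S" using j J(1) by auto
    then have "card (insert j J) \<le> col_rank e I S"
      using card_le_col_rank[OF assms _ ind] by blast
    then show False using j J(3) indep_cols_finite[OF J(2)] by simp
  qed
  with J show ?thesis by (rule that)
qed

lemma col_rank_le_card:
  assumes "finite S" shows "col_rank e I S \<le> card S"
proof -
  obtain J where J: "J \<subseteq> S" "indep_cols e I J" "card J = col_rank e I S"
    by (rule col_rank_basis[OF assms])
  then show ?thesis using card_mono[OF assms J(1)] by simp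
qed

lemma col_rank_Un_le:
  assumes "finite S1" "finite S2"
  shows "col_rank e I (S1 \<union> S2) \<le> col_rank e I S1 + col_rank e I S2"
proof -
  obtain J where J: "J \<subseteq> S1 \<union> S2" "indep_cols e I J" "card J = col_rank e I (S1 \<union> S2)"
    by (rule col_rank_basis[OF finite_UnI[OF assms]])
  have J2: "J - S1 \<subseteq> S2" using J(1) by blast
  have "card J \<le> card (J \<inter> S1) + card (J - S1)"
    by (metis Int_Diff_Un card_Un_le)
  also have "card (J \<inter> S1) \<le> col_rank e I S1"
    by (rule card_le_col_rank[OF assms(1) Int_lower2 indep_cols_subset[OF J(2) Int_lower1]])
  also have "card (J - S1) \<le> col_rank e I S2"
    by (rule card_le_col_rank[OF assms(2) J2 indep_cols_subset[OF J(2) Diff_subset]])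
  finally show ?thesis using J by simp
qed

lemma col_rank_eq_0:
  fixes e :: "'r \<Rightarrow> 'c \<Rightarrow> 'a::field"
  assumes "finite S" "\<forall>i\<in>I. \<forall>j\<in>S. e i j = 0"
  shows "col_rank e I S = 0"
proof -
  obtain J where J: "J \<subseteq> S" "indep_cols e I J" "card J = col_rank e I S"
    by (rule col_rank_basis[OF assms(1)])
  have "\<forall>i\<in>I. (\<Sum>j\<in>J. 1 * e i j) = 0"
    using assms J(1) by (auto intro!: sum.neutral)
  moreover have "(\<forall>i\<in>I. (\<Sum>j\<in>J. 1 * e i j) = 0) \<longrightarrow> (\<forall>j\<in>J. (1::'a) = 0)"
    using J(2) unfolding indep_cols_def by (rule conjunct2[THEN spec[where x = "\<lambda>_. 1"]])
  ultimately have "J = {}" by auto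
  then show ?thesis using J by simp
qed

lemma homogeneous_system_nontrivial_solution:
  fixes C :: "'l \<Rightarrow> 'c \<Rightarrow> 'a::field"
  assumes "finite L" "finite J" "card L < card J"
  shows "\<exists>c. (\<exists>j\<in>J. c j \<noteq> 0) \<and> (\<forall>l\<in>L. (\<Sum>j\<in>J. C l j * c j) = 0)"
  using assms
proof (induction L arbitrary: J C rule: finite_induct)
  case empty
  then obtain j where "j \<in> J" by fastforce
  then show ?case by (intro exI[of _ "\<lambda>_. 1"]) auto
next
  case (insert l L)
  show ?case
  proof (cases "\<forall>j\<in>J. C l j = 0")
    case True
    obtain c where "\<exists>j\<in>J. c j \<noteq> 0" "\<forall>l\<in>L. (\<Sum>j\<in>J. C l j * c j) = 0"
      using insert.IH[of J C] insert.prems insert.hyps by auto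
    then show ?thesis using True by (intro exI[of _ c]) auto
  next
    case False
    then obtain j0 where j0: "j0 \<in> J" "C l j0 \<noteq> 0" by auto
    define J' where "J' = J - {j0}"
    \<comment> \<open>Gaussian elimination of the unknown j0 by means of equation l.\<close>
    define C' where "C' l' j = C l' j - C l' j0 * C l j / C l j0" for l' j
    have "card L < card J'"
      using insert j0 unfolding J'_def by (simp add: card_Diff_singleton)
    then obtain c' where c': "\<exists>j\<in>J'. c' j \<noteq> 0" "\<forall>l'\<in>L. (\<Sum>j\<in>J'. C' l' j * c' j) = 0"
      using insert.IH[of J' C'] insert.prems unfolding J'_def by auto
    define s where "s = (\<Sum>j\<in>J'. C l j * c' j)"
    define c where "c j = (if j = j0 then - s / C l j0 else c' j)" for j
    have split: "(\<Sum>j\<in>J. D j * c j) = D j0 * c j0 + (\<Sum>j\<in>J'. D j * c' j)" for D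
    proof -
      have "(\<Sum>j\<in>J. D j * c j) = D j0 * c j0 + (\<Sum>j\<in>J'. D j * c j)"
        using j0 insert.prems(1) unfolding J'_def by (simp add: sum.remove)
      also have "(\<Sum>j\<in>J'. D j * c j) = (\<Sum>j\<in>J'. D j * c' j)"
        unfolding c_def J'_def by (intro sum.cong) auto
      finally show ?thesis .
    qed
    have "(\<Sum>j\<in>J. C l' j * c j) = 0" if l': "l' \<in> L" for l'
    proof -
      have "0 = (\<Sum>j\<in>J'. C' l' j * c' j)" using c'(2) l' by simp
      also have "\<dots> = (\<Sum>j\<in>J'. C l' j * c' j) - C l' j0 / C l j0 * s"
        unfolding C'_def s_def
        by (simp add: algebra_simps sum_subtractf sum_distrib_left sum_divide_distrib)
      finally show ?thesis using split[of "C l'"] unfolding c_def by (simp add: field_simps)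
    qed
    moreover have "(\<Sum>j\<in>J. C l j * c j) = 0"
      using split[of "C l"] j0 unfolding c_def s_def by simp
    moreover have "\<exists>j\<in>J. c j \<noteq> 0" using c'(1) unfolding c_def J'_def by auto
    ultimately show ?thesis by (intro exI[of _ c]) auto
  qed
qed

lemma card_indep_cols_le_span:
  fixes e :: "'r \<Rightarrow> 'c \<Rightarrow> 'a::field"
  assumes "finite K" "indep_cols e I J"
    and span: "\<forall>j\<in>J. \<forall>i\<in>I. e i j = (\<Sum>l\<in>K. C l j * f i l)"
  shows "card J \<le> card K"
proof (rule ccontr)
  assume "\<not> card J \<le> card K"
  then obtain c where c: "\<exists>j\<in>J. c j \<noteq> 0" "\<forall>l\<in>K. (\<Sum>j\<in>J. C l j * c j) = 0"
    using homogeneous_system_nontrivial_solution[OF assms(1) indep_cols_finite[OF assms(2)]]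
    by (metis not_le)
  have "(\<Sum>j\<in>J. c j * e i j) = 0" if i: "i \<in> I" for i
  proof -
    have "(\<Sum>j\<in>J. c j * e i j) = (\<Sum>j\<in>J. c j * (\<Sum>l\<in>K. C l j * f i l))"
      using span i by (intro sum.cong) auto
    also have "\<dots> = (\<Sum>l\<in>K. f i l * (\<Sum>j\<in>J. C l j * c j))"
      unfolding sum_distrib_left sum_distrib_right by (subst sum.swap) (simp add: mult_ac)
    finally show ?thesis using c(2) by simp
  qed
  then show False using assms(2) c(1) unfolding indep_cols_def by blast
qed

lemma col_rank_le_card_rows:
  assumes "finite I" "finite S"
  shows "col_rank e I S \<le> card I"
proof -
  obtain J where J: "J \<subseteq> S" "indep_cols e I J" "card J = col_rank e I S"
    by (rule col_rank_basis[OF assms(2)])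
  have "\<forall>j\<in>J. \<forall>i\<in>I. e i j = (\<Sum>l\<in>I. e l j * of_bool (i = l))"
    using assms(1) by simp
  from card_indep_cols_le_span[OF assms(1) J(2) this] J show ?thesis by simp
qed

lemma maximal_indep_cols_span:
  assumes ind: "indep_cols e I J" and "J \<subseteq> S"
    and max: "\<forall>j\<in>S - J. \<not> indep_cols e I (insert j J)" and "j \<in> S"
  shows "\<exists>a. \<forall>i\<in>I. e i j = (\<Sum>l\<in>J. a l * e i l)"
proof (cases "j \<in> J")
  case True
  then show ?thesis using indep_cols_finite[OF ind]
    by (intro exI[of _ "\<lambda>l. of_bool (j = l)"]) simp
next
  case False
  have fJ: "finite J" using indep_cols_finite[OF ind] .
  have "\<not> indep_cols e I (insert j J)" using max assms(4) False by blast
  then obtain c where c: "\<forall>i\<in>I. c j * e i j + (\<Sum>l\<in>J. c l * e i l) = 0"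
      "c j = 0 \<longrightarrow> (\<exists>l\<in>J. c l \<noteq> 0)"
    using False fJ unfolding indep_cols_def by auto
  have cj: "c j \<noteq> 0"
  proof
    assume "c j = 0"
    then have "\<forall>i\<in>I. (\<Sum>l\<in>J. c l * e i l) = 0" using c(1) by simp
    then have "\<forall>l\<in>J. c l = 0" using ind unfolding indep_cols_def by blast
    then show False using c(2) \<open>c j = 0\<close> by auto
  qed
  have "e i j = (\<Sum>l\<in>J. - c l / c j * e i l)" if "i \<in> I" for i
  proof -
    have "c j * e i j = - (\<Sum>l\<in>J. c l * e i l)"
      using c(1) that by (simp add: eq_neg_iff_add_eq_0)
    then have "e i j = - (\<Sum>l\<in>J. c l * e i l) / c j" using cj by (simp add: field_simps)
    also have "\<dots> = (\<Sum>l\<in>J. - c l / c j * e i l)"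
      by (simp add: sum_divide_distrib sum_negf[symmetric] field_simps)
    finally show ?thesis .
  qed
  then show ?thesis by (intro exI[of _ "\<lambda>l. - c l / c j"]) blast
qed

lemma card_indep_cols_le_col_rank:
  fixes e :: "'r \<Rightarrow> 'c \<Rightarrow> 'a::field" and f :: "'r \<Rightarrow> 'd \<Rightarrow> 'a"
  assumes "finite K" "indep_cols e I J"
    and span: "\<forall>j\<in>J. \<exists>a. \<forall>i\<in>I. e i j = (\<Sum>l\<in>K. a l * f i l)"
  shows "card J \<le> col_rank f I K"
proof -
  obtain K0 where K0: "K0 \<subseteq> K" "indep_cols f I K0" "card K0 = col_rank f I K"
      "\<forall>l\<in>K - K0. \<not> indep_cols f I (insert l K0)"
    by (rule col_rank_maximal_basis[OF assms(1)])
  have Bex: "\<forall>l\<in>K. \<exists>b. \<forall>i\<in>I. f i l = (\<Sum>l0\<in>K0. b l0 * f i l0)"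
    using maximal_indep_cols_span[OF K0(2) K0(1) K0(4)] by blast
  obtain B where B: "\<forall>l\<in>K. \<forall>i\<in>I. f i l = (\<Sum>l0\<in>K0. B l l0 * f i l0)"
    using bchoice[OF Bex] by blast
  obtain A where A: "\<forall>j\<in>J. \<forall>i\<in>I. e i j = (\<Sum>l\<in>K. A j l * f i l)"
    using bchoice[OF span] by blast
  have "\<forall>j\<in>J. \<forall>i\<in>I. e i j = (\<Sum>l0\<in>K0. (\<Sum>l\<in>K. A j l * B l l0) * f i l0)"
  proof (intro ballI)
    fix j i assume j: "j \<in> J" and i: "i \<in> I"
    have "e i j = (\<Sum>l\<in>K. A j l * f i l)" using A j i by blast
    also have "\<dots> = (\<Sum>l\<in>K. A j l * (\<Sum>l0\<in>K0. B l l0 * f i l0))"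
    proof (rule sum.cong[OF refl])
      fix l assume l: "l \<in> K"
      have Bl: "f i l = (\<Sum>l0\<in>K0. B l l0 * f i l0)" using B l i by blast
      show "A j l * f i l = A j l * (\<Sum>l0\<in>K0. B l l0 * f i l0)" by (subst Bl) (rule refl)
    qed
    also have "\<dots> = (\<Sum>l0\<in>K0. (\<Sum>l\<in>K. A j l * B l l0) * f i l0)"
      unfolding sum_distrib_left sum_distrib_right by (subst sum.swap) (simp add: mult_ac)
    finally show "e i j = (\<Sum>l0\<in>K0. (\<Sum>l\<in>K. A j l * B l l0) * f i l0)" .
  qed
  from card_indep_cols_le_span[OF finite_subset[OF K0(1) assms(1)] assms(2) this] K0(3)
  show ?thesis by simp
qed

lemma indep_cols_extend_maximal:
  assumes "finite S" "J \<subseteq> S" "indep_cols e I J"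
  shows "\<exists>J'. J \<subseteq> J' \<and> J' \<subseteq> S \<and> indep_cols e I J' \<and> (\<forall>j\<in>S - J'. \<not> indep_cols e I (insert j J'))"
  using assms(2,3)
proof (induction "card (S - J)" arbitrary: J rule: less_induct)
  case less
  show ?case
  proof (cases "\<forall>j\<in>S - J. \<not> indep_cols e I (insert j J)")
    case True
    then show ?thesis using less.prems by blast
  next
    case False
    then obtain j where j: "j \<in> S - J" "indep_cols e I (insert j J)" by auto
    have "S - insert j J = (S - J) - {j}" by auto
    then have "card (S - insert j J) < card (S - J)"
      using j assms(1) card_Diff1_less[of "S - J" j] by simp
    moreover have "insert j J \<subseteq> S" using j less.prems(1) by auto
    ultimately have "\<exists>J'. insert j J \<subseteq> J' \<and> J' \<subseteq> S \<and> indep_cols e I J' \<and>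
        (\<forall>j\<in>S - J'. \<not> indep_cols e I (insert j J'))"
      by (rule less.hyps[OF _ _ j(2)])
    then show ?thesis by blast
  qed
qed

lemma col_rank_indep:
  assumes "indep_cols e I J" shows "col_rank e I J = card J"
  using col_rank_le_card[OF indep_cols_finite[OF assms]]
    card_le_col_rank[OF indep_cols_finite[OF assms] order_refl assms]
  by (rule le_antisym)

lemma col_rank_Un_Int_le:
  assumes "finite X" "finite Y"
  shows "col_rank e I (X \<union> Y) + col_rank e I (X \<inter> Y) \<le> col_rank e I X + col_rank e I Y"
proof -
  obtain J0 where J0: "J0 \<subseteq> X \<inter> Y" "indep_cols e I J0" "card J0 = col_rank e I (X \<inter> Y)"
    using col_rank_basis[of "X \<inter> Y" e I] assms by blast
  \<comment> \<open>Extend a basis of the columns in X \<inter> Y to a maximal independent subset of X \<union> Y.\<close>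
  obtain J where J: "J0 \<subseteq> J" "J \<subseteq> X \<union> Y" "indep_cols e I J"
      "\<forall>j\<in>(X \<union> Y) - J. \<not> indep_cols e I (insert j J)"
    using indep_cols_extend_maximal[of "X \<union> Y" J0 e I] J0(1,2) assms by blast
  have fJ: "finite J" using indep_cols_finite J by auto
  obtain J' where J': "J' \<subseteq> X \<union> Y" "indep_cols e I J'" "card J' = col_rank e I (X \<union> Y)"
    using col_rank_basis[of "X \<union> Y" e I] assms by blast
  have "card J' \<le> col_rank e I J"
    using maximal_indep_cols_span[OF J(3) J(2) J(4)] J'(1)
    by (intro card_indep_cols_le_col_rank[OF fJ J'(2)]) blast
  then have U: "col_rank e I (X \<union> Y) \<le> card J" using J' col_rank_indep[OF J(3)] by simp
  have "card (J \<inter> X) \<le> col_rank e I X" "card (J \<inter> Y) \<le> col_rank e I Y"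
    by (rule card_le_col_rank[OF assms(1) Int_lower2 indep_cols_subset[OF J(3) Int_lower1]],
        rule card_le_col_rank[OF assms(2) Int_lower2 indep_cols_subset[OF J(3) Int_lower1]])
  moreover have "col_rank e I (X \<inter> Y) \<le> card (J \<inter> X \<inter> Y)"
    using J0 J fJ card_mono[of "J \<inter> X \<inter> Y" J0] by auto
  moreover have "card (J \<inter> X) + card (J \<inter> Y) = card J + card (J \<inter> X \<inter> Y)"
  proof -
    have "J \<inter> X \<union> J \<inter> Y = J" "J \<inter> X \<inter> (J \<inter> Y) = J \<inter> X \<inter> Y" using J(2) by auto
    then show ?thesis using card_Un_Int[of "J \<inter> X" "J \<inter> Y"] fJ by simp
  qed
  ultimately show ?thesis using U by linarith
qed

lemma indep_cols_spanning_rows: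
  assumes ind: "indep_cols e I J"
    and span: "\<forall>i\<in>I. \<forall>j\<in>J. e i j = (\<Sum>b\<in>B. A i b * e b j)"
  shows "indep_cols e B J"
  unfolding indep_cols_def
proof (intro conjI allI impI)
  show "finite J" using indep_cols_finite[OF ind] .
next
  fix c assume h: "\<forall>b\<in>B. (\<Sum>j\<in>J. c j * e b j) = 0"
  have "(\<Sum>j\<in>J. c j * e i j) = 0" if i: "i \<in> I" for i
  proof -
    have "(\<Sum>j\<in>J. c j * e i j) = (\<Sum>j\<in>J. c j * (\<Sum>b\<in>B. A i b * e b j))"
    proof (rule sum.cong[OF refl])
      fix j assume j: "j \<in> J"
      have Aj: "e i j = (\<Sum>b\<in>B. A i b * e b j)" by (rule span[rule_format, OF i j])
      show "c j * e i j = c j * (\<Sum>b\<in>B. A i b * e b j)" by (subst Aj) (rule refl)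
    qed
    also have "\<dots> = (\<Sum>b\<in>B. A i b * (\<Sum>j\<in>J. c j * e b j))"
      unfolding sum_distrib_left by (subst sum.swap) (simp add: mult_ac)
    finally show ?thesis using h by simp
  qed
  then show "\<forall>j\<in>J. c j = 0" using ind unfolding indep_cols_def by blast
qed

lemma col_rank_le_row_rank:
  assumes "finite I" "finite S"
  shows "col_rank e I S \<le> col_rank (\<lambda>j i. e i j) S I"
proof -
  obtain B where B: "B \<subseteq> I" "indep_cols (\<lambda>j i. e i j) S B" "card B = col_rank (\<lambda>j i. e i j) S I"
      "\<forall>i\<in>I - B. \<not> indep_cols (\<lambda>j i. e i j) S (insert i B)"
    by (rule col_rank_maximal_basis[OF assms(1)])
  have Aex: "\<forall>i\<in>I. \<exists>a. \<forall>j\<in>S. e i j = (\<Sum>b\<in>B. a b * e b j)"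
    using maximal_indep_cols_span[OF B(2) B(1) B(4)] by simp
  obtain A where A: "\<forall>i\<in>I. \<forall>j\<in>S. e i j = (\<Sum>b\<in>B. A i b * e b j)"
    using bchoice[OF Aex] by blast
  obtain J where J: "J \<subseteq> S" "indep_cols e I J" "card J = col_rank e I S"
    by (rule col_rank_basis[OF assms(2)])
  have "\<forall>i\<in>I. \<forall>j\<in>J. e i j = (\<Sum>b\<in>B. A i b * e b j)"
    using A J(1) by (meson subsetD)
  then have "indep_cols e B J" by (rule indep_cols_spanning_rows[OF J(2)])
  then have "card J \<le> col_rank e B S" using card_le_col_rank[OF assms(2) J(1)] by blast
  also have "\<dots> \<le> card B" using col_rank_le_card_rows[OF finite_subset[OF B(1) assms(1)] assms(2)] .
  finally show ?thesis using J B by simp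
qed

lemma col_rank_transpose:
  assumes "finite I" "finite S"
  shows "col_rank e I S = col_rank (\<lambda>j i. e i j) S I"
  using col_rank_le_row_rank[OF assms, of e] col_rank_le_row_rank[OF assms(2,1), of "\<lambda>j i. e i j"]
  by simp

lemma col_rank_Un_rows_le:
  assumes "finite I1" "finite I2" "finite S"
  shows "col_rank e (I1 \<union> I2) S \<le> col_rank e I1 S + col_rank e I2 S"
  using col_rank_Un_le[OF assms(1,2), of "\<lambda>j i. e i j" S] assms
  by (simp add: col_rank_transpose[of _ S])

lemma col_rank_block_triangular:
  assumes "finite S1" "finite S2" "S1 \<inter> S2 = {}" and zero: "\<forall>i\<in>I2. \<forall>j\<in>S1. e i j = 0"
  shows "col_rank e I1 S1 + col_rank e I2 S2 \<le> col_rank e (I1 \<union> I2) (S1 \<union> S2)"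
proof -
  obtain J1 where J1: "J1 \<subseteq> S1" "indep_cols e I1 J1" "card J1 = col_rank e I1 S1"
    by (rule col_rank_basis[OF assms(1)])
  obtain J2 where J2: "J2 \<subseteq> S2" "indep_cols e I2 J2" "card J2 = col_rank e I2 S2"
    by (rule col_rank_basis[OF assms(2)])
  have f1: "finite J1" and f2: "finite J2" using J1(2) J2(2) by (auto dest: indep_cols_finite)
  have dis: "J1 \<inter> J2 = {}" using J1(1) J2(1) assms(3) by auto
  have "indep_cols e (I1 \<union> I2) (J1 \<union> J2)"
    unfolding indep_cols_def
  proof (intro conjI allI impI)
    show "finite (J1 \<union> J2)" using f1 f2 by simp
  next
    fix c assume h: "\<forall>i\<in>I1 \<union> I2. (\<Sum>j\<in>J1 \<union> J2. c j * e i j) = 0"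
    have split: "(\<Sum>j\<in>J1 \<union> J2. c j * e i j) = (\<Sum>j\<in>J1. c j * e i j) + (\<Sum>j\<in>J2. c j * e i j)" for i
      using f1 f2 dis by (simp add: sum.union_disjoint)
    \<comment> \<open>The rows I2 see only the columns J2, which forces c to vanish on J2 first.\<close>
    have "(\<Sum>j\<in>J2. c j * e i j) = 0" if "i \<in> I2" for i
    proof -
      have "(\<Sum>j\<in>J1. c j * e i j) = 0"
        using zero that J1(1) by (intro sum.neutral) auto
      then show ?thesis using h that split[of i] by simp
    qed
    then have c2: "\<forall>j\<in>J2. c j = 0" using J2(2) unfolding indep_cols_def by blast
    then have "\<forall>i\<in>I1. (\<Sum>j\<in>J1. c j * e i j) = 0" using h split by simp
    then have "\<forall>j\<in>J1. c j = 0" using J1(2) unfolding indep_cols_def by blast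
    then show "\<forall>j\<in>J1 \<union> J2. c j = 0" using c2 by blast
  qed
  moreover have "J1 \<union> J2 \<subseteq> S1 \<union> S2" using J1(1) J2(1) by blast
  ultimately have "card (J1 \<union> J2) \<le> col_rank e (I1 \<union> I2) (S1 \<union> S2)"
    using card_le_col_rank[OF finite_UnI[OF assms(1,2)]] by blast
  then show ?thesis using J1(3) J2(3) f1 f2 dis by (simp add: card_Un_disjoint)
qed

lemma left_inverse_of_invertible:
  fixes R :: "'a::field mat"
  assumes R: "R \<in> carrier_mat m m" and inv: "invertible_mat R"
  obtains S where "S \<in> carrier_mat m m" "S * R = 1\<^sub>m m"
proof -
  obtain B where B: "R * B = 1\<^sub>m m" "B * R = 1\<^sub>m (dim_row B)"
    using inv R unfolding invertible_mat_def inverts_mat_def by auto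
  have "dim_row B = m" using B(2) R by (metis index_mult_mat(3) index_one_mat(3) carrier_matD(2))
  moreover have "dim_col B = m" using B(1) by (metis index_mult_mat(3) index_one_mat(3))
  ultimately show ?thesis using that B by blast
qed

lemma indep_cols_mult_left_invertible:
  fixes R :: "'a::field mat" and e :: "nat \<Rightarrow> 'c \<Rightarrow> 'a"
  assumes R: "R \<in> carrier_mat m m" and inv: "invertible_mat R"
  shows "indep_cols (\<lambda>i c. \<Sum>l<m. R $$ (i,l) * e l c) {..<m} J \<longleftrightarrow> indep_cols e {..<m} J"
proof -
  obtain S where S: "S \<in> carrier_mat m m" "S * R = 1\<^sub>m m"
    by (rule left_inverse_of_invertible[OF R inv])
  have SR: "(\<Sum>i<m. S $$ (a,i) * R $$ (i,b)) = of_bool (a = b)" if "a < m" "b < m" for a b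
  proof -
    have "(\<Sum>i<m. S $$ (a,i) * R $$ (i,b)) = (S * R) $$ (a,b)"
      using S(1) R that by (simp add: scalar_prod_def atLeast0LessThan)
    also have "\<dots> = of_bool (a = b)" using S(2) that by simp
    finally show ?thesis .
  qed
  have "(\<forall>i\<in>{..<m}. (\<Sum>l<m. R $$ (i,l) * w l) = 0) \<longleftrightarrow> (\<forall>l\<in>{..<m}. w l = 0)"
    for w :: "nat \<Rightarrow> 'a"
  proof
    assume h: "\<forall>i\<in>{..<m}. (\<Sum>l<m. R $$ (i,l) * w l) = 0"
    show "\<forall>l\<in>{..<m}. w l = 0"
    proof
      fix a assume "a \<in> {..<m}"
      then have a: "a < m" by simp
      have "w a = (\<Sum>l<m. of_bool (a = l) * w l)" using a by simp
      also have "\<dots> = (\<Sum>l<m. (\<Sum>i<m. S $$ (a,i) * R $$ (i,l)) * w l)"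
        using SR a by (intro sum.cong) auto
      also have "\<dots> = (\<Sum>i<m. S $$ (a,i) * (\<Sum>l<m. R $$ (i,l) * w l))"
        unfolding sum_distrib_left sum_distrib_right by (subst sum.swap) (simp add: mult_ac)
      finally show "w a = 0" using h by simp
    qed
  qed simp
  moreover have "(\<Sum>j\<in>J. c j * (\<Sum>l<m. R $$ (i,l) * e l j)) = (\<Sum>l<m. R $$ (i,l) * (\<Sum>j\<in>J. c j * e l j))"
    for c i
    unfolding sum_distrib_left by (subst sum.swap) (simp add: mult_ac)
  ultimately show ?thesis unfolding indep_cols_def by simp
qed

lemma col_rank_mult_left_invertible:
  fixes R :: "'a::field mat" and e :: "nat \<Rightarrow> 'c \<Rightarrow> 'a"
  assumes "R \<in> carrier_mat m m" "invertible_mat R"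
  shows "col_rank (\<lambda>i c. \<Sum>l<m. R $$ (i,l) * e l c) {..<m} T = col_rank e {..<m} T"
  unfolding col_rank_def indep_cols_mult_left_invertible[OF assms] ..

lemma col_rank_reindex_rows: "col_rank (\<lambda>i j. e (f i) j) I S = col_rank e (f ` I) S"
  unfolding col_rank_def indep_cols_def by simp

lemma indep_cols_reindex_cols:
  assumes g: "inj_on g J"
  shows "indep_cols (\<lambda>i j. e i (g j)) I J \<longleftrightarrow> indep_cols e I (g ` J)"
proof -
  have sum_reindex: "(\<Sum>y\<in>g ` J. c y * e i y) = (\<Sum>j\<in>J. c (g j) * e i (g j))" for c i
    using g by (simp add: sum.reindex)
  have LR: "(\<forall>c. (\<forall>i\<in>I. (\<Sum>j\<in>J. c j * e i (g j)) = 0) \<longrightarrow> (\<forall>j\<in>J. c j = 0)) \<longleftrightarrow>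
        (\<forall>c. (\<forall>i\<in>I. (\<Sum>y\<in>g ` J. c y * e i y) = 0) \<longrightarrow> (\<forall>y\<in>g ` J. c y = 0))"
    (is "?L \<longleftrightarrow> ?R")
  proof
    assume L: ?L
    show ?R
    proof (intro allI impI)
      fix c assume "\<forall>i\<in>I. (\<Sum>y\<in>g ` J. c y * e i y) = 0"
      then have "\<forall>i\<in>I. (\<Sum>j\<in>J. c (g j) * e i (g j)) = 0" by (simp only: sum_reindex)
      then have "\<forall>j\<in>J. c (g j) = 0" using L[rule_format, of "\<lambda>j. c (g j)"] by blast
      then show "\<forall>y\<in>g ` J. c y = 0" by blast
    qed
  next
    assume R: ?R
    show ?L
    proof (intro allI impI)
      fix c assume h: "\<forall>i\<in>I. (\<Sum>j\<in>J. c j * e i (g j)) = 0"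
      define c' where "c' y = c (inv_into J g y)" for y
      have c': "c' (g j) = c j" if "j \<in> J" for j using g that by (simp add: c'_def)
      have "(\<Sum>j\<in>J. c' (g j) * e i (g j)) = (\<Sum>j\<in>J. c j * e i (g j))" for i
        using c' by (intro sum.cong) auto
      then have "\<forall>i\<in>I. (\<Sum>y\<in>g ` J. c' y * e i y) = 0" using h by (simp only: sum_reindex)
      then have c'0: "\<forall>y\<in>g ` J. c' y = 0" using R[rule_format, of c'] by blast
      show "\<forall>j\<in>J. c j = 0"
      proof
        fix j assume "j \<in> J"
        then show "c j = 0" using c'0 c' by (metis imageI)
      qed
    qed
  qed
  have fin: "finite (g ` J) \<longleftrightarrow> finite J" using g by (rule finite_image_iff)
  show ?thesis unfolding indep_cols_def LR fin ..
qed

lemma col_rank_reindex_cols: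
  assumes g: "inj_on g S"
  shows "col_rank (\<lambda>i j. e i (g j)) I S = col_rank e I (g ` S)"
proof -
  let ?A = "{J. J \<subseteq> S \<and> indep_cols (\<lambda>i j. e i (g j)) I J}"
  let ?B = "{J'. J' \<subseteq> g ` S \<and> indep_cols e I J'}"
  have inj: "inj_on g J" if "J \<subseteq> S" for J using g that by (rule inj_on_subset)
  have "(`) g ` ?A = ?B"
  proof (intro equalityI subsetI)
    fix J' assume "J' \<in> (`) g ` ?A"
    then obtain J where "J \<subseteq> S" "indep_cols (\<lambda>i j. e i (g j)) I J" "J' = g ` J" by blast
    then show "J' \<in> ?B" using indep_cols_reindex_cols[OF inj] by blast
  next
    fix J' assume J': "J' \<in> ?B"
    define J where "J = S \<inter> g -` J'"
    have "J \<subseteq> S" "g ` J = J'" using J' unfolding J_def by auto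
    then show "J' \<in> (`) g ` ?A" using J' indep_cols_reindex_cols[OF inj, of J e I] by blast
  qed
  moreover have "card ` ((`) g ` ?A) = card ` ?A"
    unfolding image_image using inj by (intro image_cong refl) (simp add: card_image)
  ultimately show ?thesis unfolding col_rank_def by simp
qed

lemma col_rank_cong:
  assumes "\<forall>i\<in>I. \<forall>j\<in>S. e i j = e' i j"
  shows "col_rank e I S = col_rank e' I S"
proof -
  have "indep_cols e I J \<longleftrightarrow> indep_cols e' I J" if "J \<subseteq> S" for J
    using assms that by (intro indep_cols_cong) (simp add: subset_iff)
  then have "{J. J \<subseteq> S \<and> indep_cols e I J} = {J. J \<subseteq> S \<and> indep_cols e' I J}" by blast
  then show ?thesis unfolding col_rank_def by simp
qed

lemma col_rank_zero_block_le:
  assumes "finite I1" "finite I2" "finite S" "G \<subseteq> S" and zero: "\<forall>i\<in>I2. \<forall>j\<in>G. e i j = 0"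
  shows "col_rank e (I1 \<union> I2) S \<le> col_rank e I1 G + card (S - G)"
    and "col_rank e (I1 \<union> I2) S \<le> card I1 + col_rank e I2 (S - G)"
proof -
  have fG: "finite G" using finite_subset[OF assms(4,3)] .
  have fSG: "finite (S - G)" using assms(3) by simp
  have S: "G \<union> (S - G) = S" using assms(4) by blast
  have "col_rank e I2 G = 0" by (rule col_rank_eq_0[OF fG zero])
  then have "col_rank e (I1 \<union> I2) G \<le> col_rank e I1 G"
    using col_rank_Un_rows_le[OF assms(1,2) fG, of e] by simp
  moreover have "col_rank e (I1 \<union> I2) S \<le> col_rank e (I1 \<union> I2) G + col_rank e (I1 \<union> I2) (S - G)"
    using col_rank_Un_le[OF fG fSG, of e "I1 \<union> I2"] unfolding S .
  moreover have "col_rank e (I1 \<union> I2) (S - G) \<le> card (S - G)" by (rule col_rank_le_card[OF fSG])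
  ultimately show "col_rank e (I1 \<union> I2) S \<le> col_rank e I1 G + card (S - G)" by linarith
  have "col_rank e I2 S \<le> col_rank e I2 G + col_rank e I2 (S - G)"
    using col_rank_Un_le[OF fG fSG, of e I2] unfolding S .
  moreover have "col_rank e (I1 \<union> I2) S \<le> col_rank e I1 S + col_rank e I2 S"
    by (rule col_rank_Un_rows_le[OF assms(1,2,3)])
  moreover have "col_rank e I1 S \<le> card I1" by (rule col_rank_le_card_rows[OF assms(1,3)])
  ultimately show "col_rank e (I1 \<union> I2) S \<le> card I1 + col_rank e I2 (S - G)"
    using \<open>col_rank e I2 G = 0\<close> by linarith
qed

lemma unipotent_inverse_entry:
  fixes E :: "nat \<Rightarrow> nat \<Rightarrow> 'a::field"
  assumes EE: "\<And>u v. (\<Sum>w<m. E u w * E w v) = 0" and "a < m" "b < m"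
  shows "(\<Sum>l<m. (of_bool (a = l) - E a l) * (of_bool (l = b) + E l b)) = of_bool (a = b)"
proof -
  have "(of_bool (a = l) - E a l) * (of_bool (l = b) + E l b) =
      (of_bool (a = l) * of_bool (l = b) + of_bool (a = l) * E l b) -
      (E a l * of_bool (l = b) + E a l * E l b)" for l
    by (simp add: algebra_simps)
  then have "(\<Sum>l<m. (of_bool (a = l) - E a l) * (of_bool (l = b) + E l b)) =
      ((\<Sum>l<m. of_bool (a = l) * of_bool (l = b)) + (\<Sum>l<m. of_bool (a = l) * E l b)) -
      ((\<Sum>l<m. E a l * of_bool (l = b)) + (\<Sum>l<m. E a l * E l b))"
    by (simp only: sum_subtractf sum.distrib)
  also have "\<dots> = of_bool (a = b)" using assms(2,3) EE by simp
  finally show ?thesis .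
qed

lemma row_basis_expansion:
  fixes N :: "nat \<Rightarrow> 'c \<Rightarrow> 'a::field"
  assumes K: "finite K"
  obtains B D where "B \<subseteq> {..<m}" "card B = col_rank N {..<m} K"
    "\<forall>i\<in>{..<m}. \<forall>c\<in>K. N i c = (\<Sum>b\<in>B. D i b * N b c)"
proof -
  obtain B where B: "B \<subseteq> {..<m}" "indep_cols (\<lambda>c i. N i c) K B"
      "card B = col_rank (\<lambda>c i. N i c) K {..<m}"
      "\<forall>i\<in>{..<m} - B. \<not> indep_cols (\<lambda>c i. N i c) K (insert i B)"
    by (rule col_rank_maximal_basis[OF finite_lessThan])
  have Dex: "\<forall>i\<in>{..<m}. \<exists>d. \<forall>c\<in>K. N i c = (\<Sum>b\<in>B. d b * N b c)"
    using maximal_indep_cols_span[OF B(2) B(1) B(4)] by blast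
  obtain D where "\<forall>i\<in>{..<m}. \<forall>c\<in>K. N i c = (\<Sum>b\<in>B. D i b * N b c)"
    using bchoice[OF Dex] by blast
  moreover have "card B = col_rank N {..<m} K"
    using B(3) col_rank_transpose[OF finite_lessThan K, of N] by simp
  ultimately show ?thesis using B(1) by (intro that)
qed

lemma sorted_list_of_set_append_complement:
  assumes "F \<subseteq> {0..<n}"
  defines "xs \<equiv> sorted_list_of_set F @ sorted_list_of_set ({0..<n} - F)"
  shows "distinct xs" "length xs = n" "set xs = {0..<n}"
    and "card F \<le> i \<Longrightarrow> i < n \<Longrightarrow> xs ! i \<notin> F"
proof -
  have fF: "finite F" using finite_subset[OF assms(1)] by simp
  then show "distinct xs" "length xs = n" "set xs = {0..<n}"
    unfolding xs_def using assms(1) card_mono[OF _ assms(1)] by (auto simp: card_Diff_subset)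
  assume i: "card F \<le> i" "i < n"
  then have "xs ! i = sorted_list_of_set ({0..<n} - F) ! (i - card F)"
    unfolding xs_def using fF by (simp add: nth_append)
  moreover have "i - card F < length (sorted_list_of_set ({0..<n} - F))"
    using i fF assms(1) by (simp add: card_Diff_subset)
  ultimately show "xs ! i \<notin> F" by (metis DiffD2 nth_mem set_sorted_list_of_set finite_Diff finite_atLeastLessThan)
qed

lemma exists_invertible_zero_rows:
  fixes N :: "nat \<Rightarrow> 'c \<Rightarrow> 'a::field"
  assumes K: "finite K"
  obtains R where "R \<in> carrier_mat m m" "invertible_mat R"
    "\<forall>i\<in>{col_rank N {..<m} K..<m}. \<forall>c\<in>K. (\<Sum>l<m. R $$ (i,l) * N l c) = 0"
proof -
  obtain B D where B: "B \<subseteq> {..<m}" and p: "card B = col_rank N {..<m} K"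
    and D: "\<forall>i\<in>{..<m}. \<forall>c\<in>K. N i c = (\<Sum>b\<in>B. D i b * N b c)"
    by (rule row_basis_expansion[OF K])
  define \<pi> where "\<pi> = sorted_list_of_set B @ sorted_list_of_set ({0..<m} - B)"
  have "B \<subseteq> {0..<m}" using B by auto
  note \<pi> = sorted_list_of_set_append_complement[OF this, folded \<pi>_def]
  have \<pi>_less: "\<pi> ! i < m" if "i < m" for i
  proof -
    have "\<pi> ! i \<in> set \<pi>" using \<pi>(2) that by (intro nth_mem) simp
    then show ?thesis using \<pi>(3) by simp
  qed
  \<comment> \<open>R lists the rows of B first and subtracts from every other row its expansion in the rows of B;
    since E squares to zero, 1 + E inverts 1 - E.\<close>
  define E where "E u w = (if u \<notin> B \<and> w \<in> B then D u w else 0)" for u w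
  define R where "R = mat m m (\<lambda>(i,l). of_bool (\<pi> ! i = l) - E (\<pi> ! i) l)"
  define S where "S = mat m m (\<lambda>(l,j). of_bool (l = \<pi> ! j) + E l (\<pi> ! j))"
  have carrier: "R \<in> carrier_mat m m" "S \<in> carrier_mat m m" unfolding R_def S_def by auto
  have EE: "(\<Sum>w<m. E u w * E w v) = 0" for u v by (intro sum.neutral) (auto simp: E_def)
  have RS: "R * S = 1\<^sub>m m"
  proof (rule eq_matI)
    fix i j assume "i < dim_row (1\<^sub>m m :: 'a mat)" "j < dim_col (1\<^sub>m m :: 'a mat)"
    then have i: "i < m" and j: "j < m" by auto
    have "(R * S) $$ (i,j) =
        (\<Sum>l<m. (of_bool (\<pi> ! i = l) - E (\<pi> ! i) l) * (of_bool (l = \<pi> ! j) + E l (\<pi> ! j)))"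
      using i j unfolding R_def S_def by (simp add: scalar_prod_def atLeast0LessThan)
    also have "\<dots> = of_bool (\<pi> ! i = \<pi> ! j)"
      by (rule unipotent_inverse_entry[OF EE \<pi>_less[OF i] \<pi>_less[OF j]])
    also have "\<dots> = 1\<^sub>m m $$ (i,j)" using \<pi>(1,2) i j by (simp add: nth_eq_iff_index_eq)
    finally show "(R * S) $$ (i,j) = 1\<^sub>m m $$ (i,j)" .
  qed (auto simp: R_def S_def)
  have "S * R = 1\<^sub>m m" by (rule mat_mult_left_right_inverse[OF carrier RS])
  then have inv: "invertible_mat R"
    unfolding invertible_mat_def inverts_mat_def using RS carrier by auto
  have "(\<Sum>l<m. R $$ (i,l) * N l c) = 0" if i: "card B \<le> i" "i < m" and c: "c \<in> K" for i c
  proof -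
    let ?u = "\<pi> ! i"
    have u: "?u < m" "?u \<notin> B" using \<pi>_less \<pi>(4) i by auto
    have "(\<Sum>l<m. R $$ (i,l) * N l c) = (\<Sum>l<m. of_bool (?u = l) * N l c) - (\<Sum>l<m. E ?u l * N l c)"
      using i(2) unfolding R_def by (simp add: left_diff_distrib sum_subtractf)
    also have "(\<Sum>l<m. E ?u l * N l c) = (\<Sum>l\<in>B. D ?u l * N l c)"
      using B u(2) by (intro sum.mono_neutral_cong_right) (auto simp: E_def)
    also have "(\<Sum>l<m. of_bool (?u = l) * N l c) = N ?u c" using u(1) by simp
    also have "\<dots> = (\<Sum>l\<in>B. D ?u l * N l c)" using D u(1) c by blast
    finally show ?thesis by simp
  qed
  then show ?thesis using that[OF carrier(1) inv] p by auto
qed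

context vec_space
begin

lemma indep_cols_imp_lin_indpt:
  assumes A: "A \<in> carrier_mat n nc" and J: "J \<subseteq> {..<nc}"
    and ind: "indep_cols (\<lambda>i j. A $$ (i,j)) {..<n} J"
  shows "inj_on (col A) J" "lin_indpt (col A ` J)"
proof -
  have fJ: "finite J" using indep_cols_finite[OF ind] .
  have colidx: "col A j $ i = A $$ (i,j)" if "i < n" "j \<in> J" for i j
    using that A J by auto
  show inj: "inj_on (col A) J"
  proof (rule inj_onI, rule ccontr)
    fix j1 j2 assume j1: "j1 \<in> J" and j2: "j2 \<in> J" and eq: "col A j1 = col A j2" and ne: "j1 \<noteq> j2"
    define c :: "nat \<Rightarrow> 'a" where "c j = of_bool (j1 = j) - of_bool (j2 = j)" for j
    have "(\<Sum>j\<in>J. c j * A $$ (i,j)) = 0" if i: "i \<in> {..<n}" for i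
    proof -
      have "(\<Sum>j\<in>J. c j * A $$ (i,j)) = A $$ (i,j1) - A $$ (i,j2)"
        unfolding c_def using fJ j1 j2 by (simp add: left_diff_distrib sum_subtractf)
      also have "\<dots> = 0" using colidx[of i j1] colidx[of i j2] i j1 j2 eq by simp
      finally show ?thesis .
    qed
    then have "c j1 = 0" using ind j1 unfolding indep_cols_def by blast
    then show False using ne unfolding c_def by simp
  qed
  show "lin_indpt (col A ` J)"
  proof
    assume "lin_dep (col A ` J)"
    then obtain B a v where B: "finite B" "B \<subseteq> col A ` J" "lincomb a B = 0\<^sub>v n" "v \<in> B" "a v \<noteq> 0"
      unfolding lin_dep_def by auto
    define c where "c j = (if col A j \<in> B then a (col A j) else 0)" for j
    have Bc: "B \<subseteq> carrier_vec n" using B(2) A unfolding carrier_vec_def by auto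
    have "(\<Sum>j\<in>J. c j * A $$ (i,j)) = 0" if i: "i \<in> {..<n}" for i
    proof -
      let ?J' = "J \<inter> col A -` B"
      have "(\<Sum>j\<in>J. c j * A $$ (i,j)) = (\<Sum>j\<in>?J'. c j * A $$ (i,j))"
        using fJ by (intro sum.mono_neutral_right) (auto simp: c_def)
      also have "\<dots> = (\<Sum>j\<in>?J'. a (col A j) * col A j $ i)"
        using colidx i by (intro sum.cong) (auto simp: c_def)
      also have "\<dots> = (\<Sum>x\<in>col A ` ?J'. a x * x $ i)"
        using inj by (subst sum.reindex) (auto intro: inj_on_subset)
      also have "col A ` ?J' = B" using B(2) by auto
      also have "(\<Sum>x\<in>B. a x * x $ i) = lincomb a B $ i"
        using lincomb_index[OF _ Bc] i by simp
      finally show ?thesis using B(3) i by simp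
    qed
    then have c0: "\<forall>j\<in>J. c j = 0" using ind unfolding indep_cols_def by blast
    obtain j0 where j0: "j0 \<in> J" "v = col A j0" using B(2,4) by auto
    have "c j0 = a v" using j0 B(4) unfolding c_def by simp
    then show False using c0 j0 B(5) by simp
  qed
qed

lemma lin_indpt_imp_indep_cols:
  assumes A: "A \<in> carrier_mat n nc" and J: "J \<subseteq> {..<nc}"
    and inj: "inj_on (col A) J" and li: "lin_indpt (col A ` J)"
  shows "indep_cols (\<lambda>i j. A $$ (i,j)) {..<n} J"
  unfolding indep_cols_def
proof (intro conjI allI impI)
  show fJ: "finite J" using J finite_subset by blast
  fix c assume h: "\<forall>i\<in>{..<n}. (\<Sum>j\<in>J. c j * A $$ (i,j)) = 0"
  define a where "a x = c (inv_into J (col A) x)" for x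
  have Cc: "col A ` J \<subseteq> carrier_vec n" using A unfolding carrier_vec_def by auto
  have lc: "lincomb a (col A ` J) = 0\<^sub>v n"
  proof (rule eq_vecI)
    show "dim_vec (lincomb a (col A ` J)) = dim_vec (0\<^sub>v n)"
      using lincomb_closed[OF Cc] by simp
  next
    fix i assume "i < dim_vec (0\<^sub>v n)"
    then have i: "i < n" by simp
    have "lincomb a (col A ` J) $ i = (\<Sum>x\<in>col A ` J. a x * x $ i)"
      using lincomb_index[OF i Cc] .
    also have "\<dots> = (\<Sum>j\<in>J. a (col A j) * col A j $ i)"
      using inj by (simp add: sum.reindex)
    also have "\<dots> = (\<Sum>j\<in>J. c j * A $$ (i,j))"
      using inj i A J by (intro sum.cong) (auto simp: a_def)
    finally show "lincomb a (col A ` J) $ i = 0\<^sub>v n $ i" using h i by simp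
  qed
  show "\<forall>j\<in>J. c j = 0"
  proof (rule ccontr)
    assume "\<not> (\<forall>j\<in>J. c j = 0)"
    then obtain j0 where j0: "j0 \<in> J" "c j0 \<noteq> 0" by auto
    have "a (col A j0) = c j0" using inj j0 unfolding a_def by simp
    then have "lin_dep (col A ` J)"
      unfolding lin_dep_def using fJ lc j0
      by (intro exI[of _ "col A ` J"] exI[of _ a] exI[of _ "col A j0"]) auto
    then show False using li by simp
  qed
qed

lemma rank_eq_col_rank:
  assumes A: "A \<in> carrier_mat n nc"
  shows "rank A = col_rank (\<lambda>i j. A $$ (i,j)) {..<n} {..<nc}"
proof (rule antisym)
  let ?P = "\<lambda>T. T \<subseteq> set (cols A) \<and> lin_indpt T"
  obtain S where S: "finite S" "maximal S ?P"
    using maximal_exists_superset[of "set (cols A)" ?P "{}"] by (auto simp: lin_dep_def)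
  have Ssub: "S \<subseteq> col A ` {..<nc}" and Sli: "lin_indpt S"
    using S(2) A unfolding maximal_def cols_def by (auto simp: atLeast0LessThan)
  define J where "J = inv_into {..<nc} (col A) ` S"
  have J: "J \<subseteq> {..<nc}" unfolding J_def using Ssub inv_into_into[of _ "col A" "{..<nc}"] by blast
  have colJ: "col A ` J = S" unfolding J_def using Ssub by (simp add: image_inv_into_cancel)
  have "col A (inv_into {..<nc} (col A) x) = x" if "x \<in> S" for x
    using that Ssub f_inv_into_f[of x "col A" "{..<nc}"] by auto
  then have inj: "inj_on (col A) J" unfolding J_def by (intro inj_onI) auto
  have "indep_cols (\<lambda>i j. A $$ (i,j)) {..<n} J"
    using lin_indpt_imp_indep_cols[OF A J inj] colJ Sli by simp
  then have "card J \<le> col_rank (\<lambda>i j. A $$ (i,j)) {..<n} {..<nc}"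
    by (rule card_le_col_rank[OF finite_lessThan J])
  moreover have "card J = rank A"
    using rank_card_indpt[OF A S(2)] colJ card_image[OF inj] by simp
  ultimately show "rank A \<le> col_rank (\<lambda>i j. A $$ (i,j)) {..<n} {..<nc}" by simp
next
  obtain J where J: "J \<subseteq> {..<nc}" "indep_cols (\<lambda>i j. A $$ (i,j)) {..<n} J"
      "card J = col_rank (\<lambda>i j. A $$ (i,j)) {..<n} {..<nc}"
    by (rule col_rank_basis[OF finite_lessThan])
  note li = indep_cols_imp_lin_indpt[OF A J(1) J(2)]
  have "col A ` J \<subseteq> set (cols A)" using J(1) A unfolding cols_def by auto
  from rank_ge_card_indpt[OF A this li(2)] have "card (col A ` J) \<le> rank A" .
  then show "col_rank (\<lambda>i j. A $$ (i,j)) {..<n} {..<nc} \<le> rank A"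
    using J(3) card_image[OF li(1)] by simp
qed

end

definition aff_eval :: "nat \<Rightarrow> 'a::field aff \<Rightarrow> (nat \<Rightarrow> 'a) \<Rightarrow> 'a" where
  "aff_eval k p x = p 0 + (\<Sum>v<k. p (Suc v) * x v)"

definition completion_fun :: "nat \<Rightarrow> 'a::field aff mat \<Rightarrow> (nat \<Rightarrow> 'a) \<Rightarrow> nat \<Rightarrow> nat \<Rightarrow> 'a" where
  "completion_fun k N x i j = aff_eval k (N $$ (i,j)) x"

definition max_rank_on :: "nat \<Rightarrow> 'a::field aff mat \<Rightarrow> nat set \<Rightarrow> nat set \<Rightarrow> nat" where
  "max_rank_on k N I S = Max (range (\<lambda>x. col_rank (completion_fun k N x) I S))"

lemma aff_eval_sum:
  "aff_eval k (\<lambda>t. \<Sum>l<m. a l * P l t) x = (\<Sum>l<m. a l * aff_eval k (P l) x)"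
proof -
  have "(\<Sum>v<k. (\<Sum>l<m. a l * P l (Suc v)) * x v) = (\<Sum>l<m. a l * (\<Sum>v<k. P l (Suc v) * x v))"
    unfolding sum_distrib_left sum_distrib_right by (subst sum.swap) (simp add: mult_ac)
  then show ?thesis unfolding aff_eval_def distrib_left sum.distrib by simp
qed

lemma finite_range_col_rank:
  assumes "finite S" shows "finite (range (\<lambda>x. col_rank (f x) I S))"
proof -
  have "range (\<lambda>x. col_rank (f x) I S) \<subseteq> {..card S}" using col_rank_le_card[OF assms] by auto
  then show ?thesis by (rule finite_subset) simp
qed

lemma col_rank_le_max_rank_on:
  assumes "finite S" shows "col_rank (completion_fun k N x) I S \<le> max_rank_on k N I S"
  unfolding max_rank_on_def using finite_range_col_rank[OF assms] by (rule Max_ge) simp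

lemma max_rank_on_attained:
  assumes "finite S"
  obtains x where "max_rank_on k N I S = col_rank (completion_fun k N x) I S"
proof -
  have "max_rank_on k N I S \<in> range (\<lambda>x. col_rank (completion_fun k N x) I S)"
    unfolding max_rank_on_def using finite_range_col_rank[OF assms] by (rule Max_in) simp
  then show ?thesis using that by blast
qed

lemma max_rank_on_le_card:
  assumes "finite S" shows "max_rank_on k N I S \<le> card S"
proof -
  obtain x where "max_rank_on k N I S = col_rank (completion_fun k N x) I S"
    by (rule max_rank_on_attained[OF assms])
  then show ?thesis using col_rank_le_card[OF assms] by simp
qed

lemma max_rank_on_le_card_rows:
  assumes "finite I" "finite S" shows "max_rank_on k N I S \<le> card I"
proof -
  obtain x where "max_rank_on k N I S = col_rank (completion_fun k N x) I S"
    by (rule max_rank_on_attained[OF assms(2)])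
  then show ?thesis using col_rank_le_card_rows[OF assms] by simp
qed

lemma maxRank_eq_max_rank_on: "maxRank k N = max_rank_on k N {..<dim_row N} {..<dim_col N}"
proof -
  have "vec_space.rank (dim_row N) (completion k N x) =
      col_rank (completion_fun k N x) {..<dim_row N} {..<dim_col N}" for x
  proof -
    have "vec_space.rank (dim_row N) (completion k N x) =
        col_rank (\<lambda>i j. completion k N x $$ (i,j)) {..<dim_row N} {..<dim_col N}"
      using vec_space.rank_eq_col_rank[of "completion k N x" "dim_row N" "dim_col N"]
      by (simp add: completion_def)
    also have "\<dots> = col_rank (completion_fun k N x) {..<dim_row N} {..<dim_col N}"
      by (rule col_rank_cong) (simp add: completion_def completion_fun_def aff_eval_def)
    finally show ?thesis .
  qed
  then show ?thesis unfolding maxRank_def max_rank_on_def by presburger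
qed

lemma max_rank_on_reindex:
  assumes "\<forall>x. \<forall>i\<in>I. \<forall>j\<in>J. completion_fun k A x i j = completion_fun k N x (f i) (g j)"
    and "inj_on g J"
  shows "max_rank_on k A I J = max_rank_on k N (f ` I) (g ` J)"
proof -
  have "col_rank (completion_fun k A x) I J = col_rank (completion_fun k N x) (f ` I) (g ` J)" for x
  proof -
    have "col_rank (completion_fun k A x) I J =
        col_rank (\<lambda>i j. completion_fun k N x (f i) (g j)) I J"
      using assms(1) by (intro col_rank_cong) simp
    also have "\<dots> = col_rank (\<lambda>i j. completion_fun k N x i (g j)) (f ` I) J"
      by (rule col_rank_reindex_rows)
    also have "\<dots> = col_rank (completion_fun k N x) (f ` I) (g ` J)"
      using assms(2) by (rule col_rank_reindex_cols)
    finally show ?thesis .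
  qed
  then show ?thesis unfolding max_rank_on_def by simp
qed

lemma completion_fun_const_mult:
  assumes "R \<in> carrier_mat m (dim_row M)" "i < m" "j < dim_col M"
  shows "completion_fun k (const_mult R M) x i j = (\<Sum>l<dim_row M. R $$ (i,l) * completion_fun k M x l j)"
  using assms unfolding completion_fun_def const_mult_def by (simp add: aff_eval_sum)

lemma col_rank_completion_const_mult:
  fixes M :: "'a::field aff mat"
  assumes R: "R \<in> carrier_mat (dim_row M) (dim_row M)" "invertible_mat R"
    and S: "S \<subseteq> {..<dim_col M}"
  shows "col_rank (completion_fun k (const_mult R M) x) {..<dim_row M} S =
    col_rank (completion_fun k M x) {..<dim_row M} S"
proof -
  have "col_rank (completion_fun k (const_mult R M) x) {..<dim_row M} S =
      col_rank (\<lambda>i j. \<Sum>l<dim_row M. R $$ (i,l) * completion_fun k M x l j) {..<dim_row M} S"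
    using S by (intro col_rank_cong) (auto simp: completion_fun_const_mult[OF R(1)])
  also have "\<dots> = col_rank (completion_fun k M x) {..<dim_row M} S"
    by (rule col_rank_mult_left_invertible[OF R])
  finally show ?thesis .
qed

definition lower_zero_block :: "'a::zero aff mat \<Rightarrow> nat \<Rightarrow> nat set \<Rightarrow> bool" where
  "lower_zero_block N r G \<longleftrightarrow> (\<forall>i\<in>{dim_row N - r..<dim_row N}. \<forall>j\<in>G. N $$ (i,j) = (\<lambda>_. 0))"

lemma completion_fun_zero: "N $$ (i,j) = (\<lambda>_. 0) \<Longrightarrow> completion_fun k N x i j = 0"
  by (simp add: completion_fun_def aff_eval_def)

lemma completion_fun_const_mult_cong:
  assumes "R \<in> carrier_mat m (dim_row M)" "i < m" "j < dim_col M"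
    and "\<forall>l<dim_row M. completion_fun k M x l j = completion_fun k M y l j"
  shows "completion_fun k (const_mult R M) x i j = completion_fun k (const_mult R M) y i j"
proof -
  have "(\<Sum>l<dim_row M. R $$ (i,l) * completion_fun k M x l j) =
      (\<Sum>l<dim_row M. R $$ (i,l) * completion_fun k M y l j)"
    using assms(4) by (intro sum.cong) auto
  then show ?thesis unfolding completion_fun_const_mult[OF assms(1-3)] .
qed

lemma completion_fun_lower_zero_block:
  assumes "R \<in> carrier_mat (dim_row M) (dim_row M)" "lower_zero_block (const_mult R M) r G"
  shows "\<forall>i\<in>{dim_row M - r..<dim_row M}. \<forall>j\<in>G. completion_fun k (const_mult R M) x i j = 0"
proof -
  have "dim_row (const_mult R M) = dim_row M" using assms(1) by (simp add: const_mult_def)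
  then show ?thesis using assms(2) unfolding lower_zero_block_def by (simp add: completion_fun_zero)
qed

lemma bij_betw_nth_sorted_list_of_set:
  "finite A \<Longrightarrow> bij_betw ((!) (sorted_list_of_set A)) {..<card A} A"
  by (rule bij_betw_nth) simp_all

lemma col_perm_index:
  assumes F: "F \<subseteq> {0..<dim_col M}" and i: "i < dim_row M"
  shows "j < card F \<Longrightarrow> col_perm F M $$ (i,j) = M $$ (i, sorted_list_of_set F ! j)"
    and "j < dim_col M - card F \<Longrightarrow>
      col_perm F M $$ (i, j + card F) = M $$ (i, sorted_list_of_set ({0..<dim_col M} - F) ! j)"
proof -
  have "finite F" using F finite_subset by blast
  then have len: "length (sorted_list_of_set F) = card F" by simp
  have "card F \<le> dim_col M" using card_mono[OF _ F] by simp
  then show "j < card F \<Longrightarrow> col_perm F M $$ (i,j) = M $$ (i, sorted_list_of_set F ! j)"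
    and "j < dim_col M - card F \<Longrightarrow>
      col_perm F M $$ (i, j + card F) = M $$ (i, sorted_list_of_set ({0..<dim_col M} - F) ! j)"
    using i len unfolding col_perm_def by (simp_all add: nth_append)
qed

lemma const_mult_col_perm:
  assumes "dim_col R = dim_row M" "F \<subseteq> {0..<dim_col M}"
  shows "const_mult R (col_perm F M) = col_perm F (const_mult R M)"
proof -
  define xs where "xs = sorted_list_of_set F @ sorted_list_of_set ({0..<dim_col M} - F)"
  note L = sorted_list_of_set_append_complement[OF assms(2), folded xs_def]
  have less: "xs ! j < dim_col M" if "j < dim_col M" for j
  proof -
    have "xs ! j \<in> set xs" using L(2) that by (intro nth_mem) simp
    then show ?thesis using L(3) by simp
  qed
  show ?thesis
  proof (rule eq_matI)
    fix i j assume "i < dim_row (col_perm F (const_mult R M))" "j < dim_col (col_perm F (const_mult R M))"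
    then show "const_mult R (col_perm F M) $$ (i,j) = col_perm F (const_mult R M) $$ (i,j)"
      using less[of j, unfolded xs_def] assms(1) by (simp add: const_mult_def col_perm_def)
  qed (simp_all add: const_mult_def col_perm_def)
qed

lemma split_block_col_perm_blocks:
  assumes F: "F \<subseteq> {0..<dim_col N}" and r: "r \<le> dim_row N"
    and split: "split_block (col_perm F N) (dim_row N - r) (card F) = (A, B, Z, C)"
  defines "sF \<equiv> sorted_list_of_set F" and "sG \<equiv> sorted_list_of_set ({0..<dim_col N} - F)"
  shows "A = mat (dim_row N - r) (card F) (\<lambda>(i,j). N $$ (i, sF ! j))"
    and "Z = mat r (card F) (\<lambda>(i,j). N $$ (i + (dim_row N - r), sF ! j))"
    and "C = mat r (dim_col N - card F) (\<lambda>(i,j). N $$ (i + (dim_row N - r), sG ! j))"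
proof -
  have blocks: "A = mat (dim_row N - r) (card F) (\<lambda>ij. col_perm F N $$ ij)"
      "Z = mat r (card F) (\<lambda>(i,j). col_perm F N $$ (i + (dim_row N - r), j))"
      "C = mat r (dim_col N - card F) (\<lambda>(i,j). col_perm F N $$ (i + (dim_row N - r), j + card F))"
    using split r unfolding split_block_def Let_def col_perm_def by auto
  note idx = col_perm_index[OF F, folded sF_def sG_def]
  show "A = mat (dim_row N - r) (card F) (\<lambda>(i,j). N $$ (i, sF ! j))"
    and "Z = mat r (card F) (\<lambda>(i,j). N $$ (i + (dim_row N - r), sF ! j))"
    and "C = mat r (dim_col N - card F) (\<lambda>(i,j). N $$ (i + (dim_row N - r), sG ! j))"
    unfolding blocks using idx r by (auto intro!: cong_mat)
qed

lemma split_block_col_perm: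
  fixes N :: "'a::field aff mat"
  assumes F: "F \<subseteq> {0..<dim_col N}" and r: "r \<le> dim_row N"
    and split: "split_block (col_perm F N) (dim_row N - r) (card F) = (A, B, Z, C)"
  shows "(\<forall>i<r. \<forall>j<card F. Z $$ (i,j) = (\<lambda>_. 0)) \<longleftrightarrow> lower_zero_block N r F"
    and "FRmR k A \<longleftrightarrow> card F = 0 \<or> max_rank_on k N {..<dim_row N - r} F = dim_row N - r"
    and "FCmR k C \<longleftrightarrow> r = 0 \<or>
      max_rank_on k N {dim_row N - r..<dim_row N} ({..<dim_col N} - F) = dim_col N - card F"
proof -
  define m n where "m = dim_row N" and "n = dim_col N"
  define sF sG where "sF = sorted_list_of_set F" and "sG = sorted_list_of_set ({0..<n} - F)"
  note blocks = split_block_col_perm_blocks[OF F r split, folded m_def n_def sF_def sG_def]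
  have fF: "finite F" using F finite_subset by blast
  have cG: "card ({0..<n} - F) = n - card F" using F fF by (simp add: card_Diff_subset n_def)
  have bF: "bij_betw ((!) sF) {..<card F} F"
    unfolding sF_def by (rule bij_betw_nth_sorted_list_of_set[OF fF])
  have bG: "bij_betw ((!) sG) {..<n - card F} ({0..<n} - F)"
    using bij_betw_nth_sorted_list_of_set[of "{0..<n} - F"] unfolding sG_def cG by simp
  have "(\<lambda>i. i + (m - r)) ` {..<r} = {0 + (m - r)..<r + (m - r)}"
    unfolding lessThan_atLeast0 by (rule image_add_atLeastLessThan')
  also have "\<dots> = {m - r..<m}" using r unfolding m_def by simp
  finally have shift: "(\<lambda>i. i + (m - r)) ` {..<r} = {m - r..<m}" .
  have "(\<forall>i<r. \<forall>j<card F. Z $$ (i,j) = (\<lambda>_. 0)) \<longleftrightarrow>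
      (\<forall>i\<in>(\<lambda>i. i + (m - r)) ` {..<r}. \<forall>c\<in>(!) sF ` {..<card F}. N $$ (i,c) = (\<lambda>_. 0))"
    unfolding blocks(2) by auto
  then show "(\<forall>i<r. \<forall>j<card F. Z $$ (i,j) = (\<lambda>_. 0)) \<longleftrightarrow> lower_zero_block N r F"
    unfolding lower_zero_block_def m_def[symmetric] shift bij_betw_imp_surj_on[OF bF] .
  have "max_rank_on k A {..<m - r} {..<card F} =
      max_rank_on k N ((\<lambda>i. i) ` {..<m - r}) ((!) sF ` {..<card F})"
    using bij_betw_imp_inj_on[OF bF] unfolding blocks(1)
    by (intro max_rank_on_reindex) (auto simp: completion_fun_def)
  then show "FRmR k A \<longleftrightarrow> card F = 0 \<or> max_rank_on k N {..<dim_row N - r} F = dim_row N - r"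
    unfolding FRmR_def maxRank_eq_max_rank_on bij_betw_imp_surj_on[OF bF] blocks(1) m_def by simp
  have "max_rank_on k C {..<r} {..<n - card F} =
      max_rank_on k N ((\<lambda>i. i + (m - r)) ` {..<r}) ((!) sG ` {..<n - card F})"
    using bij_betw_imp_inj_on[OF bG] unfolding blocks(3)
    by (intro max_rank_on_reindex) (auto simp: completion_fun_def sG_def)
  moreover have "(!) sG ` {..<n - card F} = {..<n} - F" using bij_betw_imp_surj_on[OF bG] by auto
  ultimately show "FCmR k C \<longleftrightarrow> r = 0 \<or>
      max_rank_on k N {dim_row N - r..<dim_row N} ({..<dim_col N} - F) = dim_col N - card F"
    unfolding FCmR_def maxRank_eq_max_rank_on m_def[symmetric] n_def[symmetric] shift
    by (simp add: blocks(3))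
qed

lemma block_set_iff:
  fixes M :: "'a::field aff mat"
  shows "block_set P k M F \<longleftrightarrow> F \<subseteq> {..<dim_col M} \<and>
    (\<exists>R r. R \<in> carrier_mat (dim_row M) (dim_row M) \<and> invertible_mat R \<and> r \<le> dim_row M \<and>
      lower_zero_block (const_mult R M) r F \<and> P (r + card F) (max (dim_row M) (dim_col M)) \<and>
      (card F = 0 \<or> max_rank_on k (const_mult R M) {..<dim_row M - r} F = dim_row M - r) \<and>
      (r = 0 \<or> max_rank_on k (const_mult R M) {dim_row M - r..<dim_row M} ({..<dim_col M} - F) =
        dim_col M - card F))"
proof (cases "F \<subseteq> {0..<dim_col M}")
  case F: True
  have "(R \<in> carrier_mat (dim_row M) (dim_row M) \<and> invertible_mat R \<and> r \<le> dim_row M \<and>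
      (case split_block (const_mult R (col_perm F M)) (dim_row M - r) (card F) of
          (A, B, Z, C) \<Rightarrow> (\<forall>i<r. \<forall>j<card F. Z $$ (i,j) = (\<lambda>_. 0)) \<and>
            P (r + card F) (max (dim_row M) (dim_col M)) \<and> FRmR k A \<and> FCmR k C)) \<longleftrightarrow>
      (R \<in> carrier_mat (dim_row M) (dim_row M) \<and> invertible_mat R \<and> r \<le> dim_row M \<and>
      lower_zero_block (const_mult R M) r F \<and> P (r + card F) (max (dim_row M) (dim_col M)) \<and>
      (card F = 0 \<or> max_rank_on k (const_mult R M) {..<dim_row M - r} F = dim_row M - r) \<and>
      (r = 0 \<or> max_rank_on k (const_mult R M) {dim_row M - r..<dim_row M} ({..<dim_col M} - F) =
        dim_col M - card F))" for R r
  proof (cases "R \<in> carrier_mat (dim_row M) (dim_row M) \<and> r \<le> dim_row M")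
    case True
    then have R: "R \<in> carrier_mat (dim_row M) (dim_row M)" and r: "r \<le> dim_row M" by auto
    let ?N = "const_mult R M"
    have dims: "dim_row ?N = dim_row M" "dim_col ?N = dim_col M"
      using R by (auto simp: const_mult_def)
    obtain A B Z C where split: "split_block (col_perm F ?N) (dim_row M - r) (card F) = (A, B, Z, C)"
      by (metis prod_cases4)
    have "const_mult R (col_perm F M) = col_perm F ?N" using R F by (simp add: const_mult_col_perm)
    moreover note split_block_col_perm[where N = ?N, unfolded dims, OF F r split]
    ultimately show ?thesis using split R r by simp
  qed auto
  then show ?thesis unfolding block_set_def by (simp only: atLeast0LessThan F simp_thms)
next
  case False
  then show ?thesis unfolding block_set_def by (simp add: atLeast0LessThan)
qed

lemma rank_completion_le_blocks:
  fixes M :: "'a::field aff mat"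
  assumes R: "R \<in> carrier_mat (dim_row M) (dim_row M)" "invertible_mat R"
    and r: "r \<le> dim_row M" and Z: "lower_zero_block (const_mult R M) r G"
    and G: "G \<subseteq> {..<dim_col M}"
  shows "col_rank (completion_fun k M x) {..<dim_row M} {..<dim_col M} \<le>
      col_rank (completion_fun k (const_mult R M) x) {..<dim_row M - r} G + (dim_col M - card G)"
    and "col_rank (completion_fun k M x) {..<dim_row M} {..<dim_col M} \<le> (dim_row M - r) +
      col_rank (completion_fun k (const_mult R M) x) {dim_row M - r..<dim_row M} ({..<dim_col M} - G)"
proof -
  let ?m = "dim_row M" and ?n = "dim_col M" and ?E = "completion_fun k (const_mult R M) x"
  have rows: "{..<?m - r} \<union> {?m - r..<?m} = {..<?m}" using r by auto
  note zero = completion_fun_lower_zero_block[OF R(1) Z, of k x]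
  have "col_rank (completion_fun k M x) {..<?m} {..<?n} = col_rank ?E ({..<?m - r} \<union> {?m - r..<?m}) {..<?n}"
    unfolding rows using col_rank_completion_const_mult[OF R, of "{..<?n}"] by simp
  moreover have "card ({..<?n} - G) = ?n - card G"
    using G finite_subset[OF G] by (simp add: card_Diff_subset)
  moreover note col_rank_zero_block_le[OF finite_lessThan finite_atLeastLessThan finite_lessThan G zero]
  ultimately show "col_rank (completion_fun k M x) {..<?m} {..<?n} \<le> col_rank ?E {..<?m - r} G + (?n - card G)"
    and "col_rank (completion_fun k M x) {..<?m} {..<?n} \<le> (?m - r) + col_rank ?E {?m - r..<?m} ({..<?n} - G)"
    by simp_all
qed

lemma maxRank_attained:
  obtains x where "maxRank k M = col_rank (completion_fun k M x) {..<dim_row M} {..<dim_col M}"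
  using max_rank_on_attained[OF finite_lessThan] unfolding maxRank_eq_max_rank_on by blast

lemma maxRank_add_zero_block_le:
  fixes M :: "'a::field aff mat"
  assumes R: "R \<in> carrier_mat (dim_row M) (dim_row M)" "invertible_mat R"
    and r: "r \<le> dim_row M" and Z: "lower_zero_block (const_mult R M) r G"
    and G: "G \<subseteq> {..<dim_col M}"
  shows "maxRank k M + r + card G \<le> dim_row M + dim_col M"
proof -
  obtain x where x: "maxRank k M = col_rank (completion_fun k M x) {..<dim_row M} {..<dim_col M}"
    by (rule maxRank_attained)
  have "col_rank (completion_fun k (const_mult R M) x) {dim_row M - r..<dim_row M} ({..<dim_col M} - G)
      \<le> dim_col M - card G"
    using col_rank_le_card[of "{..<dim_col M} - G"] G finite_subset[OF G] by (simp add: card_Diff_subset)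
  moreover have "card G \<le> dim_col M" using card_mono[OF _ G] by simp
  ultimately show ?thesis using rank_completion_le_blocks(2)[OF R r Z G, of k x] x r by linarith
qed

lemma aci_completion_merge:
  fixes M :: "'a::field aff mat"
  assumes aci: "aci_matrix k M" and G: "G \<subseteq> {..<dim_col M}"
  obtains x where "\<forall>i<dim_row M. \<forall>j\<in>G. completion_fun k M x i j = completion_fun k M x1 i j"
    and "\<forall>i<dim_row M. \<forall>j\<in>{..<dim_col M} - G. completion_fun k M x i j = completion_fun k M x2 i j"
proof -
  let ?occurs = "\<lambda>v. \<exists>i j. i < dim_row M \<and> j \<in> G \<and> (M $$ (i,j)) (Suc v) \<noteq> 0"
  define x where "x v = (if ?occurs v then x1 v else x2 v)" for v
  have term1: "(M $$ (i,j)) (Suc v) * x v = (M $$ (i,j)) (Suc v) * x1 v"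
    if "i < dim_row M" "j \<in> G" for i j v
    using that unfolding x_def by auto
  have 1: "completion_fun k M x i j = completion_fun k M x1 i j"
    if "i < dim_row M" "j \<in> G" for i j
    unfolding completion_fun_def aff_eval_def using term1[OF that]
    by (intro arg_cong2[where f = "(+)"] refl sum.cong) auto
  \<comment> \<open>An indeterminate occurring in a column outside G does not occur in G.\<close>
  have term2: "(M $$ (i,j)) (Suc v) * x v = (M $$ (i,j)) (Suc v) * x2 v"
    if "i < dim_row M" "j \<in> {..<dim_col M} - G" "v < k" for i j v
  proof (cases "?occurs v")
    case True
    then obtain i' j' where "i' < dim_row M" "j' \<in> G" "(M $$ (i',j')) (Suc v) \<noteq> 0" by blast
    then have "(M $$ (i,j)) (Suc v) = 0"
      using aci that G unfolding aci_matrix_def by blast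
    then show ?thesis by simp
  qed (auto simp: x_def)
  have 2: "completion_fun k M x i j = completion_fun k M x2 i j"
    if "i < dim_row M" "j \<in> {..<dim_col M} - G" for i j
    unfolding completion_fun_def aff_eval_def using term2[OF that]
    by (intro arg_cong2[where f = "(+)"] refl sum.cong) auto
  show ?thesis using 1 2 that by blast
qed

lemma maxRank_ge_blocks:
  fixes M :: "'a::field aff mat"
  assumes aci: "aci_matrix k M" and R: "R \<in> carrier_mat (dim_row M) (dim_row M)" "invertible_mat R"
    and r: "r \<le> dim_row M" and Z: "lower_zero_block (const_mult R M) r G"
    and G: "G \<subseteq> {..<dim_col M}"
    and top: "dim_row M - r \<le> max_rank_on k (const_mult R M) {..<dim_row M - r} G"
    and bottom: "dim_col M - card G \<le>
      max_rank_on k (const_mult R M) {dim_row M - r..<dim_row M} ({..<dim_col M} - G)"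
  shows "(dim_row M - r) + (dim_col M - card G) \<le> maxRank k M"
proof -
  let ?m = "dim_row M" and ?n = "dim_col M" and ?N = "const_mult R M"
  let ?T = "{..<?m - r}" and ?B = "{?m - r..<?m}" and ?G' = "{..<?n} - G"
  have fG: "finite G" using finite_subset[OF G] by simp
  obtain x1 where x1: "max_rank_on k ?N ?T G = col_rank (completion_fun k ?N x1) ?T G"
    by (rule max_rank_on_attained[OF fG])
  obtain x2 where x2: "max_rank_on k ?N ?B ?G' = col_rank (completion_fun k ?N x2) ?B ?G'"
    by (rule max_rank_on_attained[OF finite_Diff[OF finite_lessThan]])
  obtain x where x: "\<forall>i<?m. \<forall>j\<in>G. completion_fun k M x i j = completion_fun k M x1 i j"
      "\<forall>i<?m. \<forall>j\<in>?G'. completion_fun k M x i j = completion_fun k M x2 i j"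
    by (rule aci_completion_merge[OF aci G])
  have E1: "col_rank (completion_fun k ?N x1) ?T G = col_rank (completion_fun k ?N x) ?T G"
    using x(1) G by (intro col_rank_cong ballI completion_fun_const_mult_cong[OF R(1)]) auto
  have E2: "col_rank (completion_fun k ?N x2) ?B ?G' = col_rank (completion_fun k ?N x) ?B ?G'"
    using x(2) by (intro col_rank_cong ballI completion_fun_const_mult_cong[OF R(1)]) auto
  note zero = completion_fun_lower_zero_block[OF R(1) Z, of k x]
  have "(?m - r) + (?n - card G) \<le>
      col_rank (completion_fun k ?N x1) ?T G + col_rank (completion_fun k ?N x2) ?B ?G'"
    using top bottom x1 x2 by simp
  also have "\<dots> = col_rank (completion_fun k ?N x) ?T G + col_rank (completion_fun k ?N x) ?B ?G'"
    unfolding E1 E2 ..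
  also have "\<dots> \<le> col_rank (completion_fun k ?N x) (?T \<union> ?B) (G \<union> ?G')"
    using fG zero by (intro col_rank_block_triangular) auto
  also have "?T \<union> ?B = {..<?m}" using r by auto
  also have "G \<union> ?G' = {..<?n}" using G by auto
  also have "col_rank (completion_fun k ?N x) {..<?m} {..<?n} \<le> maxRank k M"
    using col_rank_completion_const_mult[OF R, of "{..<?n}"]
      col_rank_le_max_rank_on[OF finite_lessThan, of k M x "{..<?m}"]
    unfolding maxRank_eq_max_rank_on by simp
  finally show ?thesis .
qed

lemma block_set_imp_maxRank:
  fixes M :: "'a::field aff mat"
  assumes aci: "aci_matrix k M" and big: "\<And>a b. P a b \<Longrightarrow> b \<le> a" and F: "block_set P k M F"
  obtains R r where "R \<in> carrier_mat (dim_row M) (dim_row M)" "invertible_mat R" "r \<le> dim_row M"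
    "lower_zero_block (const_mult R M) r F" "P (r + card F) (max (dim_row M) (dim_col M))"
    "maxRank k M + r + card F = dim_row M + dim_col M"
proof -
  let ?m = "dim_row M" and ?n = "dim_col M"
  obtain R r where G: "F \<subseteq> {..<?n}" and R: "R \<in> carrier_mat ?m ?m" "invertible_mat R"
    and r: "r \<le> ?m" and Z: "lower_zero_block (const_mult R M) r F"
    and P: "P (r + card F) (max ?m ?n)"
    and A: "card F = 0 \<or> max_rank_on k (const_mult R M) {..<?m - r} F = ?m - r"
    and C: "r = 0 \<or> max_rank_on k (const_mult R M) {?m - r..<?m} ({..<?n} - F) = ?n - card F"
    using F unfolding block_set_iff by blast
  \<comment> \<open>A degenerate block A (resp. C) has no rows since the zero block is at least medium.\<close>
  have "max ?m ?n \<le> r + card F" using big[OF P] .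
  then have "?m - r \<le> max_rank_on k (const_mult R M) {..<?m - r} F"
    and "?n - card F \<le> max_rank_on k (const_mult R M) {?m - r..<?m} ({..<?n} - F)"
    using A C by auto
  from maxRank_ge_blocks[OF aci R r Z G this] have "?m + ?n \<le> maxRank k M + r + card F"
    using r card_mono[OF _ G] by simp
  with maxRank_add_zero_block_le[OF R r Z G, where k = k] have "maxRank k M + r + card F = ?m + ?n" by simp
  with R r Z P show ?thesis by (rule that)
qed

lemma block_set_of_maxRank:
  fixes M :: "'a::field aff mat"
  assumes R: "R \<in> carrier_mat (dim_row M) (dim_row M)" "invertible_mat R"
    and r: "r \<le> dim_row M" and Z: "lower_zero_block (const_mult R M) r G"
    and G: "G \<subseteq> {..<dim_col M}"
    and tight: "maxRank k M + r + card G = dim_row M + dim_col M"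
    and P: "P (r + card G) (max (dim_row M) (dim_col M))"
  shows "block_set P k M G"
proof -
  let ?m = "dim_row M" and ?n = "dim_col M" and ?N = "const_mult R M"
  let ?T = "{..<?m - r}" and ?B = "{?m - r..<?m}" and ?G' = "{..<?n} - G"
  have fG: "finite G" using finite_subset[OF G] by simp
  have cG: "card ?G' = ?n - card G" using G fG by (simp add: card_Diff_subset)
  obtain x where x: "maxRank k M = col_rank (completion_fun k M x) {..<?m} {..<?n}"
    by (rule maxRank_attained)
  note blocks = rank_completion_le_blocks[OF R r Z G, of k x, folded x]
  have "max_rank_on k ?N ?T G = ?m - r"
  proof (rule antisym)
    show "max_rank_on k ?N ?T G \<le> ?m - r"
      using max_rank_on_le_card_rows[OF finite_lessThan fG, of k ?N "?m - r"] by simp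
    show "?m - r \<le> max_rank_on k ?N ?T G"
      using blocks(1) col_rank_le_max_rank_on[OF fG, of k ?N x ?T] tight r card_mono[OF finite_lessThan G]
      by simp
  qed
  moreover have "max_rank_on k ?N ?B ?G' = ?n - card G"
  proof (rule antisym)
    show "max_rank_on k ?N ?B ?G' \<le> ?n - card G"
      using max_rank_on_le_card[of ?G' k ?N ?B] cG by simp
    show "?n - card G \<le> max_rank_on k ?N ?B ?G'"
      using blocks(2) col_rank_le_max_rank_on[of ?G' k ?N x ?B] tight r by simp
  qed
  ultimately show ?thesis unfolding block_set_iff using G R r Z P by blast
qed

definition coeff_rank :: "nat \<Rightarrow> 'a::field aff mat \<Rightarrow> nat set \<Rightarrow> nat" where
  "coeff_rank k M G = col_rank (\<lambda>i (j, t). (M $$ (i,j)) t) {..<dim_row M} (G \<times> {..k})"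

lemma coeff_rank_le_dim_row:
  assumes "finite G" shows "coeff_rank k M G \<le> dim_row M"
  unfolding coeff_rank_def
  using col_rank_le_card_rows[OF finite_lessThan finite_cartesian_product[OF assms finite_atMost]]
  by simp

lemma coeff_rank_Un_Int_le:
  assumes "finite F1" "finite F2"
  shows "coeff_rank k M (F1 \<union> F2) + coeff_rank k M (F1 \<inter> F2) \<le> coeff_rank k M F1 + coeff_rank k M F2"
proof -
  have "(F1 \<union> F2) \<times> {..k} = F1 \<times> {..k} \<union> F2 \<times> {..k}" "(F1 \<inter> F2) \<times> {..k} = F1 \<times> {..k} \<inter> F2 \<times> {..k}"
    by auto
  then show ?thesis
    unfolding coeff_rank_def using col_rank_Un_Int_le[of "F1 \<times> {..k}" "F2 \<times> {..k}"] assms by simp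
qed

lemma coeff_rank_add_zero_block_le:
  fixes M :: "'a::field aff mat"
  assumes R: "R \<in> carrier_mat (dim_row M) (dim_row M)" "invertible_mat R"
    and r: "r \<le> dim_row M" and Z: "lower_zero_block (const_mult R M) r G"
    and G: "G \<subseteq> {..<dim_col M}"
  shows "coeff_rank k M G + r \<le> dim_row M"
proof -
  have fG: "finite G" using finite_subset[OF G] by simp
  let ?m = "dim_row M" and ?K = "G \<times> {..k}"
  let ?E = "\<lambda>i (j, t). \<Sum>l<?m. R $$ (i,l) * (M $$ (l,j)) t"
  have fK: "finite ?K" using fG by simp
  have "coeff_rank k M G = col_rank ?E {..<?m} ?K"
    unfolding coeff_rank_def
    using col_rank_mult_left_invertible[OF R, of "\<lambda>i (j, t). (M $$ (i,j)) t" ?K]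
    by (simp add: case_prod_beta')
  also have "\<dots> \<le> col_rank ?E {..<?m - r} ?K + col_rank ?E {?m - r..<?m} ?K"
  proof -
    have "{..<?m - r} \<union> {?m - r..<?m} = {..<?m}" using r by auto
    then show ?thesis using col_rank_Un_rows_le[of "{..<?m - r}" "{?m - r..<?m}" ?K ?E] fK by simp
  qed
  also have "col_rank ?E {..<?m - r} ?K \<le> ?m - r"
    using col_rank_le_card_rows[OF finite_lessThan fK, of ?E "?m - r"] by simp
  also have "col_rank ?E {?m - r..<?m} ?K = 0"
  proof (rule col_rank_eq_0[OF fK], intro ballI)
    fix i c assume i: "i \<in> {?m - r..<?m}" and c: "c \<in> ?K"
    have "dim_row (const_mult R M) = ?m" using R(1) by (simp add: const_mult_def)
    then have "const_mult R M $$ (i, fst c) = (\<lambda>_. 0)" using Z i c unfolding lower_zero_block_def by auto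
    then show "?E i c = 0"
      using i c G R(1) unfolding const_mult_def by (auto simp: fun_eq_iff split: prod.splits)
  qed
  finally show ?thesis using r by linarith
qed

lemma exists_zero_block_coeff_rank:
  fixes M :: "'a::field aff mat"
  assumes aci: "aci_matrix k M" and G: "G \<subseteq> {..<dim_col M}"
  obtains R where "R \<in> carrier_mat (dim_row M) (dim_row M)" "invertible_mat R"
    "lower_zero_block (const_mult R M) (dim_row M - coeff_rank k M G) G"
proof -
  let ?m = "dim_row M"
  have fG: "finite G" using finite_subset[OF G] by simp
  obtain R where R: "R \<in> carrier_mat ?m ?m" "invertible_mat R"
    and zero: "\<forall>i\<in>{coeff_rank k M G..<?m}. \<forall>c\<in>G \<times> {..k}.
      (\<Sum>l<?m. R $$ (i,l) * (case c of (j, t) \<Rightarrow> (M $$ (l,j)) t)) = 0"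
    using exists_invertible_zero_rows[where K = "G \<times> {..k}" and N = "\<lambda>i (j, t). (M $$ (i,j)) t"
        and m = ?m] fG
    unfolding coeff_rank_def by auto
  \<comment> \<open>Coefficients of indeterminates beyond x_(k-1) vanish, so G \<times> {..k} covers all coefficients.\<close>
  have "(\<Sum>l<?m. R $$ (i,l) * (M $$ (l,j)) t) = 0"
    if "i \<in> {coeff_rank k M G..<?m}" "j \<in> G" for i j t
  proof (cases "t \<le> k")
    case True
    then show ?thesis using zero that by fastforce
  next
    case False
    then obtain v where "t = Suc v" "k \<le> v" by (cases t) auto
    then show ?thesis using aci that G unfolding aci_matrix_def by auto
  qed
  moreover have "coeff_rank k M G \<le> ?m" by (rule coeff_rank_le_dim_row[OF fG])
  ultimately have "lower_zero_block (const_mult R M) (?m - coeff_rank k M G) G"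
    using R(1) G unfolding lower_zero_block_def const_mult_def by auto
  with R show ?thesis by (rule that)
qed

lemma maxRank_add_card_le:
  fixes M :: "'a::field aff mat"
  assumes aci: "aci_matrix k M" and G: "G \<subseteq> {..<dim_col M}"
  shows "maxRank k M + card G \<le> dim_col M + coeff_rank k M G"
proof -
  obtain R where R: "R \<in> carrier_mat (dim_row M) (dim_row M)" "invertible_mat R"
    and Z: "lower_zero_block (const_mult R M) (dim_row M - coeff_rank k M G) G"
    by (rule exists_zero_block_coeff_rank[OF aci G])
  have "coeff_rank k M G \<le> dim_row M" using coeff_rank_le_dim_row finite_subset[OF G] by blast
  then show ?thesis using maxRank_add_zero_block_le[OF R _ Z G, where k = k] by simp
qed

lemma block_set_iff_maxRank:
  fixes M :: "'a::field aff mat"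
  assumes aci: "aci_matrix k M" and big: "\<And>a b. P a b \<Longrightarrow> b \<le> a"
  shows "block_set P k M G \<longleftrightarrow> G \<subseteq> {..<dim_col M} \<and>
    maxRank k M + card G = dim_col M + coeff_rank k M G \<and>
    P (dim_row M + dim_col M - maxRank k M) (max (dim_row M) (dim_col M))"
proof
  assume G: "block_set P k M G"
  then have sub: "G \<subseteq> {..<dim_col M}" unfolding block_set_iff by blast
  obtain R r where R: "R \<in> carrier_mat (dim_row M) (dim_row M)" "invertible_mat R"
    and r: "r \<le> dim_row M" and Z: "lower_zero_block (const_mult R M) r G"
    and P: "P (r + card G) (max (dim_row M) (dim_col M))"
    and tight: "maxRank k M + r + card G = dim_row M + dim_col M"
    by (rule block_set_imp_maxRank[OF aci big G])
  have "coeff_rank k M G + r \<le> dim_row M" by (rule coeff_rank_add_zero_block_le[OF R r Z sub])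
  moreover have "maxRank k M + card G \<le> dim_col M + coeff_rank k M G"
    by (rule maxRank_add_card_le[OF aci sub])
  moreover have "r + card G = dim_row M + dim_col M - maxRank k M" using tight by simp
  ultimately show "G \<subseteq> {..<dim_col M} \<and> maxRank k M + card G = dim_col M + coeff_rank k M G \<and>
      P (dim_row M + dim_col M - maxRank k M) (max (dim_row M) (dim_col M))"
    using sub tight P by auto
next
  assume "G \<subseteq> {..<dim_col M} \<and> maxRank k M + card G = dim_col M + coeff_rank k M G \<and>
    P (dim_row M + dim_col M - maxRank k M) (max (dim_row M) (dim_col M))"
  then have G: "G \<subseteq> {..<dim_col M}" and eq: "maxRank k M + card G = dim_col M + coeff_rank k M G"
    and P: "P (dim_row M + dim_col M - maxRank k M) (max (dim_row M) (dim_col M))" by auto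
  obtain R where R: "R \<in> carrier_mat (dim_row M) (dim_row M)" "invertible_mat R"
    and Z: "lower_zero_block (const_mult R M) (dim_row M - coeff_rank k M G) G"
    by (rule exists_zero_block_coeff_rank[OF aci G])
  have le: "coeff_rank k M G \<le> dim_row M" using coeff_rank_le_dim_row finite_subset[OF G] by blast
  then have "maxRank k M + (dim_row M - coeff_rank k M G) + card G = dim_row M + dim_col M"
    using eq by simp
  moreover have "dim_row M - coeff_rank k M G + card G = dim_row M + dim_col M - maxRank k M"
    using eq le by simp
  ultimately show "block_set P k M G"
    using block_set_of_maxRank[OF R _ Z G] P le by simp
qed

lemma block_set_Int_Un:
  fixes M :: "'a::field aff mat"
  assumes aci: "aci_matrix k M" and big: "\<And>a b. P a b \<Longrightarrow> b \<le> a"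
    and F1: "block_set P k M F1" and F2: "block_set P k M F2"
  shows "block_set P k M (F1 \<inter> F2) \<and> block_set P k M (F1 \<union> F2)"
proof -
  have char: "block_set P k M G \<longleftrightarrow> G \<subseteq> {..<dim_col M} \<and>
      maxRank k M + card G = dim_col M + coeff_rank k M G \<and>
      P (dim_row M + dim_col M - maxRank k M) (max (dim_row M) (dim_col M))" for G
    using aci big by (rule block_set_iff_maxRank)
  obtain sub1: "F1 \<subseteq> {..<dim_col M}" and e1: "maxRank k M + card F1 = dim_col M + coeff_rank k M F1"
    and P: "P (dim_row M + dim_col M - maxRank k M) (max (dim_row M) (dim_col M))"
    using char[THEN iffD1, OF F1] by blast
  obtain sub2: "F2 \<subseteq> {..<dim_col M}" and e2: "maxRank k M + card F2 = dim_col M + coeff_rank k M F2"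
    using char[THEN iffD1, OF F2] by blast
  have fin: "finite F1" "finite F2" using sub1 sub2 by (auto intro: finite_subset)
  \<comment> \<open>The defect card - coeff_rank is supermodular and bounded by dim_col M - maxRank k M,
    with equality at F1 and F2, hence also at F1 \<inter> F2 and F1 \<union> F2.\<close>
  have "card (F1 \<union> F2) + card (F1 \<inter> F2) = card F1 + card F2"
    using card_Un_Int[OF fin] by simp
  moreover note coeff_rank_Un_Int_le[OF fin, of k M]
  moreover have "maxRank k M + card (F1 \<inter> F2) \<le> dim_col M + coeff_rank k M (F1 \<inter> F2)"
    using sub1 by (intro maxRank_add_card_le[OF aci]) auto
  moreover have "maxRank k M + card (F1 \<union> F2) \<le> dim_col M + coeff_rank k M (F1 \<union> F2)"
    using sub1 sub2 by (intro maxRank_add_card_le[OF aci]) auto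
  ultimately have "maxRank k M + card (F1 \<inter> F2) = dim_col M + coeff_rank k M (F1 \<inter> F2)"
    and "maxRank k M + card (F1 \<union> F2) = dim_col M + coeff_rank k M (F1 \<union> F2)"
    using e1 e2 by linarith+
  then show ?thesis using sub1 sub2 P char by auto
qed

theorem theorem5p6:
  fixes k :: nat and M :: "'a::field aff mat" and F1 F2 :: "nat set"
  assumes "aci_matrix k M"
  shows "(factor_set k M F1 \<and> factor_set k M F2 \<longrightarrow>
            factor_set k M (F1 \<inter> F2) \<and> factor_set k M (F1 \<union> F2)) \<and>
         (semifactor_set k M F1 \<and> semifactor_set k M F2 \<longrightarrow>
            semifactor_set k M (F1 \<inter> F2) \<and> semifactor_set k M (F1 \<union> F2))"
proof -
  have closed: "block_set P k M F1 \<and> block_set P k M F2 \<longrightarrow>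
      block_set P k M (F1 \<inter> F2) \<and> block_set P k M (F1 \<union> F2)"
    if "\<And>a b. P a b \<Longrightarrow> b \<le> a" for P
    using block_set_Int_Un[OF assms that] by blast
  show ?thesis unfolding factor_set_def semifactor_set_def by (intro conjI closed) auto
qed

end
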